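(* $(\mathfrak{P}(X),\preceq)$ is a bounded graded poset with minimum element $\{(\{x\},\emptyset):x\in X\}$ and maximum element $\{(X,\emptyset)\}$. Its height function is $h:\mathfrak{P}(X)\to\{0,1,\dots,|X|-1\}$, $h(\mathcal{S})=|X|-|\mathcal{P}(\mathcal{S})|+|\mathcal{H}(\mathcal{S})|$.
   Context: Let $X$ be a finite non-empty set. A set pair system on $X$ is a set of ordered pairs $(S,H)$ of subsets of $X$ with $S\ne\emptyset$ and $S\cap H=\emptyset$. On set pairs, $(S_1,H_1)\le(S_2,H_2)$ iff they are equal or one of: $S_1\cup H_1\subseteq S_2$; $S_1\cup H_1\subseteq H_2$; $S_1\subsetneq S_2$ and $H_1=H_2\ne\emptyset$. For set pair systems, $\mathcal{S}_1\preceq\mathcal{S}_2$ iff (SP1) for every $(S_1,H_1)\in\mathcal{S}_1$ there is $(S_2,H_2)\in\mathcal{S}_2$ with $(S_1,H_1)\le(S_2,H_2)$, and (SP2) for every $(S_2,H_2)\in\mathcal{S}_2$ with $H_2\ne\emptyset$, if some $(S_1,H_1)\in\mathcal{S}_1$ has $H_1=H_2$ then some such $(S_1,H_1)$ satisfies $(S_1,H_1)\le(S_2,H_2)$. A polestar system is a set pair system $\mathcal{S}$ with (PL1) $\mathcal{P}(\mathcal{S})=\{S:(S,H)\in\mathcal{S}\}$ is a partition of $X$; (PL2) distinct $(S,H),(S',H')\in\mathcal{S}$ have $S\ne S'$; (PL3) for each $(S,H)\in\mathcal{S}$ with $H\ne\emptyset$, $(H,\emptyset)\in\mathcal{S}$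 and there is exactly one $(S',H')\in\mathcal{S}$ with $(S',H')\ne(S,H)$ and $H'=H$. $\mathcal{H}(\mathcal{S})=\{H:(S,H)\in\mathcal{S},H\ne\emptyset\}$; $\mathfrak{P}(X)$ is the set of polestar systems on $X$. A poset is bounded if it has a minimum and a maximum; a chain is a non-empty set of pairwise comparable elements, of length (number of elements minus one); the poset is graded if all maximal chains have the same length; its height function assigns to $a$ the maximum length of a chain all of whose elements are $\le a$. *)

theory Defs
  imports Main
begin

type_synonym 'a setpair = "'a set \<times> 'a set"
type_synonym 'a sps = "'a setpair set"

definition set_pair_system :: "'a set \<Rightarrow> 'a sps \<Rightarrow> bool" where
  "set_pair_system X \<S> \<longleftrightarrow>
     (\<forall>(S,H)\<in>\<S>. S \<subseteq> X \<and> H \<subseteq> X \<and> S \<noteq> {} \<and> S \<inter> H = {})"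

definition sp_le :: "'a setpair \<Rightarrow> 'a setpair \<Rightarrow> bool" where
  "sp_le p q \<longleftrightarrow> (case p of (S1,H1) \<Rightarrow> case q of (S2,H2) \<Rightarrow>
      p = q \<or> S1 \<union> H1 \<subseteq> S2 \<or> S1 \<union> H1 \<subseteq> H2 \<or> (S1 \<subset> S2 \<and> H1 = H2 \<and> H2 \<noteq> {}))"

definition sps_le :: "'a sps \<Rightarrow> 'a sps \<Rightarrow> bool" where
  "sps_le \<S>1 \<S>2 \<longleftrightarrow>
     (\<forall>p1\<in>\<S>1. \<exists>p2\<in>\<S>2. sp_le p1 p2) \<and>
     (\<forall>(S2,H2)\<in>\<S>2. H2 \<noteq> {} \<longrightarrow>
        (\<exists>(S1,H1)\<in>\<S>1. H1 = H2) \<longrightarrow> (\<exists>(S1,H1)\<in>\<S>1. H1 = H2 \<and> sp_le (S1,H1) (S2,H2)))"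

definition parts :: "'a sps \<Rightarrow> 'a set set" where
  "parts \<S> = {S. \<exists>H. (S,H) \<in> \<S>}"

definition holes :: "'a sps \<Rightarrow> 'a set set" where
  "holes \<S> = {H. H \<noteq> {} \<and> (\<exists>S. (S,H) \<in> \<S>)}"

definition is_partition :: "'a set \<Rightarrow> 'a set set \<Rightarrow> bool" where
  "is_partition X P \<longleftrightarrow> (\<forall>B\<in>P. B \<noteq> {}) \<and> \<Union>P = X \<and>
     (\<forall>B\<in>P. \<forall>C\<in>P. B \<noteq> C \<longrightarrow> B \<inter> C = {})"

definition polestar_system :: "'a set \<Rightarrow> 'a sps \<Rightarrow> bool" where
  "polestar_system X \<S> \<longleftrightarrow> set_pair_system X \<S> \<and>
     is_partition X (parts \<S>) \<and>
     (\<forall>p\<in>\<S>. \<forall>q\<in>\<S>. p \<noteq> q \<longrightarrow> fst p \<noteq> fst q) \<and>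
     (\<forall>(S,H)\<in>\<S>. H \<noteq> {} \<longrightarrow>
        (H, {}) \<in> \<S> \<and> (\<exists>!q. q \<in> \<S> \<and> q \<noteq> (S,H) \<and> snd q = H))"

definition polestars :: "'a set \<Rightarrow> 'a sps set" where
  "polestars X = {\<S>. polestar_system X \<S>}"

definition partial_order_on' :: "'b set \<Rightarrow> ('b \<Rightarrow> 'b \<Rightarrow> bool) \<Rightarrow> bool" where
  "partial_order_on' P le \<longleftrightarrow>
     (\<forall>a\<in>P. le a a) \<and>
     (\<forall>a\<in>P. \<forall>b\<in>P. le a b \<and> le b a \<longrightarrow> a = b) \<and>
     (\<forall>a\<in>P. \<forall>b\<in>P. \<forall>c\<in>P. le a b \<and> le b c \<longrightarrow> le a c)"

definition is_min :: "'b set \<Rightarrow> ('b \<Rightarrow> 'b \<Rightarrow> bool) \<Rightarrow> 'b \<Rightarrow> bool" where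
  "is_min P le m \<longleftrightarrow> m \<in> P \<and> (\<forall>a\<in>P. le m a)"

definition is_max :: "'b set \<Rightarrow> ('b \<Rightarrow> 'b \<Rightarrow> bool) \<Rightarrow> 'b \<Rightarrow> bool" where
  "is_max P le m \<longleftrightarrow> m \<in> P \<and> (\<forall>a\<in>P. le a m)"

definition bounded_poset :: "'b set \<Rightarrow> ('b \<Rightarrow> 'b \<Rightarrow> bool) \<Rightarrow> bool" where
  "bounded_poset P le \<longleftrightarrow> partial_order_on' P le \<and>
     (\<exists>m. is_min P le m) \<and> (\<exists>M. is_max P le M)"

definition is_chain :: "'b set \<Rightarrow> ('b \<Rightarrow> 'b \<Rightarrow> bool) \<Rightarrow> 'b set \<Rightarrow> bool" where
  "is_chain P le C \<longleftrightarrow> C \<noteq> {} \<and> C \<subseteq> P \<and> (\<forall>a\<in>C. \<forall>b\<in>C. le a b \<or> le b a)"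

definition chain_length :: "'b set \<Rightarrow> nat" where
  "chain_length C = card C - 1"

definition maximal_chain :: "'b set \<Rightarrow> ('b \<Rightarrow> 'b \<Rightarrow> bool) \<Rightarrow> 'b set \<Rightarrow> bool" where
  "maximal_chain P le C \<longleftrightarrow> is_chain P le C \<and>
     (\<forall>D. is_chain P le D \<and> C \<subseteq> D \<longrightarrow> D = C)"

definition graded :: "'b set \<Rightarrow> ('b \<Rightarrow> 'b \<Rightarrow> bool) \<Rightarrow> bool" where
  "graded P le \<longleftrightarrow> (\<forall>C D. maximal_chain P le C \<and> maximal_chain P le D \<longrightarrow>
       chain_length C = chain_length D)"

definition height :: "'b set \<Rightarrow> ('b \<Rightarrow> 'b \<Rightarrow> bool) \<Rightarrow> 'b \<Rightarrow> nat" where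
  "height P le a = Max {chain_length C | C. is_chain P le C \<and> (\<forall>c\<in>C. le c a)}"

end

theory Submission
  imports Defs
begin

text \<open>The rank \<open>h(\<S>) = |X| - |\<P>(\<S>)| + |\<H>(\<S>)|\<close> vanishes at the discrete system and increases by
  exactly one under each of three elementary moves: merging a part with empty hole into another
  part (neither of them being a hole), filling a hole by merging it with its two satellites into
  a single part, and turning a free part into the common hole of two other free parts. Whenever
  \<open>\<S>\<^sub>1 \<prec> \<S>\<^sub>2\<close>, one of these moves applied to \<open>\<S>\<^sub>1\<close> stays below \<open>\<S>\<^sub>2\<close>: if some part of \<open>\<S>\<^sub>2\<close> contains two
  parts of \<open>\<S>\<^sub>1\<close>, merge or fill inside it; otherwise both systems have the same parts and \<open>\<S>\<^sub>2\<close>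
  has a new hole. On a finite bounded poset a rank function with this property is the height
  function, and every maximal chain passes through every rank.\<close>

section \<open>Posets graded by a rank function\<close>

text \<open>These hypotheses make the poset graded, with height function \<open>rank\<close>.\<close>

locale ranked_poset =
  fixes P :: "'b set" and le :: "'b \<Rightarrow> 'b \<Rightarrow> bool" and rank :: "'b \<Rightarrow> nat" and bot top :: 'b
  assumes finite_carrier: "finite P" and partial_order: "partial_order_on' P le"
    and bot_in: "bot \<in> P" and top_in: "top \<in> P"
    and bot_le: "\<And>a. a \<in> P \<Longrightarrow> le bot a" and le_top: "\<And>a. a \<in> P \<Longrightarrow> le a top"
    and rank_bot: "rank bot = 0"
    and rank_step: "\<And>a b. a \<in> P \<Longrightarrow> b \<in> P \<Longrightarrow> le a b \<Longrightarrow> a \<noteq> b \<Longrightarrow>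
      \<exists>c\<in>P. le a c \<and> le c b \<and> rank c = Suc (rank a)"
begin

lemma refl: "a \<in> P \<Longrightarrow> le a a"
  using partial_order unfolding partial_order_on'_def by blast

lemma antisym: "a \<in> P \<Longrightarrow> b \<in> P \<Longrightarrow> le a b \<Longrightarrow> le b a \<Longrightarrow> a = b"
  using partial_order unfolding partial_order_on'_def by blast

lemma trans: "a \<in> P \<Longrightarrow> b \<in> P \<Longrightarrow> c \<in> P \<Longrightarrow> le a b \<Longrightarrow> le b c \<Longrightarrow> le a c"
  using partial_order unfolding partial_order_on'_def by blast

definition interval :: "'b \<Rightarrow> 'b \<Rightarrow> 'b set" where
  "interval a b = {c \<in> P. le a c \<and> le c b}"

lemma card_interval_less:
  assumes "a \<in> P" "b \<in> P" "c \<in> P" "le a c" "le c b" "a \<noteq> c"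
  shows "card (interval c b) < card (interval a b)"
proof (rule psubset_card_mono)
  show "finite (interval a b)" using finite_carrier unfolding interval_def by simp
  have "interval c b \<subseteq> interval a b"
    unfolding interval_def using trans[OF assms(1,3)] assms(4) by blast
  moreover have "a \<in> interval a b"
    unfolding interval_def using assms refl trans by blast
  moreover have "a \<notin> interval c b"
    unfolding interval_def using antisym[OF assms(1,3)] assms(4,6) by blast
  ultimately show "interval c b \<subset> interval a b" by blast
qed

lemma rank_strict_mono: "a \<in> P \<Longrightarrow> b \<in> P \<Longrightarrow> le a b \<Longrightarrow> a \<noteq> b \<Longrightarrow> rank a < rank b"
proof (induction "card (interval a b)" arbitrary: a rule: less_induct)
  case less
  obtain c where c: "c \<in> P" "le a c" "le c b" "rank c = Suc (rank a)"
    using rank_step less.prems by blast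
  show ?case
  proof (cases "c = b")
    case False
    have "card (interval c b) < card (interval a b)"
      using card_interval_less[OF less.prems(1,2) c(1-3)] c(4) by (metis n_not_Suc_n)
    with less.hyps c less.prems(2) False have "rank c < rank b" by blast
    with c(4) show ?thesis by simp
  qed (use c in simp)
qed

lemma rank_mono: "a \<in> P \<Longrightarrow> b \<in> P \<Longrightarrow> le a b \<Longrightarrow> rank a \<le> rank b"
  using rank_strict_mono by fastforce

lemma chain_rank_le_imp_le:
  assumes "is_chain P le C" "a \<in> C" "d \<in> C" "rank d \<le> rank a"
  shows "le d a"
proof -
  have "a \<in> P" "d \<in> P" using assms unfolding is_chain_def by auto
  moreover have "le d a \<or> le a d" using assms(1-3) unfolding is_chain_def by blast
  ultimately show ?thesis using rank_strict_mono assms(4) refl by fastforce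
qed

lemma chain_between:
  assumes "a \<in> P" "b \<in> P" "le a b"
  shows "\<exists>C. is_chain P le C \<and> a \<in> C \<and> (\<forall>x\<in>C. le a x \<and> le x b) \<and> card C = Suc (rank b - rank a)"
  using assms
proof (induction "card (interval a b)" arbitrary: a rule: less_induct)
  case less
  show ?case
  proof (cases "a = b")
    case True
    have "is_chain P le {a}" unfolding is_chain_def using less.prems refl by blast
    with True less.prems refl show ?thesis by (intro exI[of _ "{a}"]) auto
  next
    case False
    obtain c where c: "c \<in> P" "le a c" "le c b" "rank c = Suc (rank a)"
      using rank_step less.prems False by blast
    have "card (interval c b) < card (interval a b)"
      using card_interval_less[OF less.prems(1,2) c(1-3)] c(4) by (metis n_not_Suc_n)
    then obtain C where C: "is_chain P le C" "c \<in> C" "\<forall>x\<in>C. le c x \<and> le x b"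
        "card C = Suc (rank b - rank c)"
      using less.hyps c(1,3) less.prems(2) by blast
    have CP: "C \<subseteq> P" using C(1) unfolding is_chain_def by blast
    have above_a: "\<forall>x\<in>C. le a x \<and> le x b" using C(3) c(1,2) CP less.prems(1) trans by blast
    have "a \<notin> C" using C(3) antisym[OF c(1) less.prems(1)] c(2,4) by fastforce
    moreover have "is_chain P le (insert a C)"
      using C(1) less.prems(1) above_a CP refl unfolding is_chain_def by blast
    moreover have "finite C" using CP finite_carrier finite_subset by blast
    moreover have "rank c \<le> rank b" using rank_mono c(1,3) less.prems(2) by blast
    ultimately show ?thesis using C(4) c(4) above_a less.prems refl
      by (intro exI[of _ "insert a C"]) auto
  qed
qed

lemma card_chain_below:
  assumes "is_chain P le C" "a \<in> P" "\<forall>c\<in>C. le c a"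
  shows "card C \<le> Suc (rank a)"
proof -
  have CP: "C \<subseteq> P" using assms unfolding is_chain_def by blast
  have "inj_on rank C"
  proof (rule inj_onI)
    fix x y assume "x \<in> C" "y \<in> C" "rank x = rank y"
    then show "x = y" using chain_rank_le_imp_le[OF assms(1)] antisym CP by (metis le_refl subsetD)
  qed
  moreover have "rank ` C \<subseteq> {..rank a}" using rank_mono assms CP by fastforce
  ultimately show ?thesis by (metis card_atMost card_image card_mono finite_atMost)
qed

lemma height_eq_rank:
  assumes "a \<in> P" shows "height P le a = rank a"
proof -
  let ?lengths = "{chain_length C | C. is_chain P le C \<and> (\<forall>c\<in>C. le c a)}"
  obtain C where C: "is_chain P le C" "\<forall>x\<in>C. le bot x \<and> le x a" "card C = Suc (rank a)"
    using chain_between[OF bot_in assms bot_le[OF assms]] rank_bot by auto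
  then have "rank a \<in> ?lengths" unfolding chain_length_def by force
  moreover have bounded: "\<forall>l\<in>?lengths. l \<le> rank a"
    using card_chain_below[OF _ assms] unfolding chain_length_def by fastforce
  moreover from bounded have "finite ?lengths" by (meson finite_atMost finite_subset atMost_iff subsetI)
  ultimately show ?thesis unfolding height_def by (meson Max_eqI)
qed

lemma maximal_chain_ends:
  assumes "maximal_chain P le C"
  shows "bot \<in> C" "top \<in> C"
proof -
  have C: "is_chain P le C" "C \<subseteq> P"
    using assms unfolding maximal_chain_def is_chain_def by blast+
  have "is_chain P le (insert bot C)" "is_chain P le (insert top C)"
    using C bot_in top_in bot_le le_top refl unfolding is_chain_def by blast+
  with assms show "bot \<in> C" "top \<in> C" unfolding maximal_chain_def by blast+
qed

text \<open>A gap \<open>k\<close> in the ranks along a maximal chain would be bridged by a rank step from the last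
  element below \<open>k\<close>, contradicting maximality.\<close>

lemma maximal_chain_rank_onto:
  assumes mc: "maximal_chain P le C" and k: "k \<le> rank top"
  shows "k \<in> rank ` C"
proof (rule ccontr)
  assume gap: "k \<notin> rank ` C"
  have ch: "is_chain P le C" using mc unfolding maximal_chain_def by blast
  then have CP: "C \<subseteq> P" unfolding is_chain_def by blast
  have "bot \<in> C" "top \<in> C" using maximal_chain_ends[OF mc] .
  with gap k rank_bot have "0 < k" "k < rank top" by (auto simp: image_iff le_less)
  obtain a where a: "a \<in> C" "rank a < k" and a_max: "\<And>d. d \<in> C \<Longrightarrow> rank d < k \<Longrightarrow> rank d \<le> rank a"
    using Lattices_Big.ex_has_greatest_nat[of "\<lambda>d. d \<in> C \<and> rank d < k" bot rank k]
      \<open>bot \<in> C\<close> \<open>0 < k\<close> rank_bot by auto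
  obtain b where b: "b \<in> C" "k < rank b" and b_min: "\<And>d. d \<in> C \<Longrightarrow> k < rank d \<Longrightarrow> rank b \<le> rank d"
    using ex_has_least_nat[of "\<lambda>d. d \<in> C \<and> k < rank d" top rank]
      \<open>top \<in> C\<close> \<open>k < rank top\<close> by auto
  have "le a b" "a \<noteq> b" using chain_rank_le_imp_le[OF ch b(1) a(1)] a(2) b(2) by auto
  then obtain c where c: "c \<in> P" "le a c" "le c b" "rank c = Suc (rank a)"
    using rank_step a(1) b(1) CP by blast
  have "c \<notin> C"
  proof
    assume "c \<in> C"
    with gap a(2) c(4) have "rank c < k" by (metis image_eqI Suc_leI le_neq_implies_less)
    with a_max[OF \<open>c \<in> C\<close>] c(4) show False by simp
  qed
  moreover have "is_chain P le (insert c C)"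
  proof -
    have "le d c \<or> le c d" if "d \<in> C" for d
    proof (cases "rank d < k")
      case True
      then have "le d a" using chain_rank_le_imp_le[OF ch a(1) that] a_max[OF that] by blast
      then show ?thesis using trans that a(1) c(1,2) CP by blast
    next
      case False
      with gap that have "k < rank d" by (metis image_eqI linorder_neqE_nat)
      then have "le b d" using chain_rank_le_imp_le[OF ch that b(1)] b_min[OF that] by blast
      then show ?thesis using trans that b(1) c(1,3) CP by blast
    qed
    then show ?thesis using ch c(1) refl unfolding is_chain_def by auto
  qed
  ultimately show False using mc unfolding maximal_chain_def by blast
qed

lemma card_maximal_chain:
  assumes "maximal_chain P le C"
  shows "card C = Suc (rank top)"
proof -
  have ch: "is_chain P le C" using assms unfolding maximal_chain_def by blast
  then have "finite C" using finite_carrier finite_subset unfolding is_chain_def by blast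
  have "{..rank top} \<subseteq> rank ` C" using maximal_chain_rank_onto[OF assms] by blast
  then have "Suc (rank top) \<le> card C"
    using card_mono[OF finite_imageI[OF \<open>finite C\<close>]] card_image_le[OF \<open>finite C\<close>]
    by (metis card_atMost le_trans)
  moreover have "card C \<le> Suc (rank top)" using card_chain_below[OF ch top_in] le_top ch
    unfolding is_chain_def by blast
  ultimately show ?thesis by simp
qed

lemma graded: "graded P le"
  unfolding graded_def chain_length_def using card_maximal_chain by simp

lemma bounded: "bounded_poset P le"
  unfolding bounded_poset_def is_min_def is_max_def
  using partial_order bot_in top_in bot_le le_top by blast

end

lemma polestar_systemD:
  assumes "polestar_system X A"
  shows "set_pair_system X A" "is_partition X (parts A)"
    "\<forall>p\<in>A. \<forall>q\<in>A. p \<noteq> q \<longrightarrow> fst p \<noteq> fst q"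
    "\<forall>(S,H)\<in>A. H \<noteq> {} \<longrightarrow> (H,{}) \<in> A \<and> (\<exists>!q. q \<in> A \<and> q \<noteq> (S,H) \<and> snd q = H)"
  using assms unfolding polestar_system_def by auto

lemma polestar_pairD:
  assumes "polestar_system X A" "(S,H) \<in> A"
  shows "S \<subseteq> X" "H \<subseteq> X" "S \<noteq> {}" "S \<inter> H = {}"
  using polestar_systemD(1)[OF assms(1)] assms(2) unfolding set_pair_system_def by auto

lemma polestar_overlap:
  assumes "polestar_system X A" "(S,H) \<in> A" "(S',H') \<in> A" "S \<inter> S' \<noteq> {}"
  shows "S = S' \<and> H = H'"
proof -
  have "S \<in> parts A" "S' \<in> parts A" using assms(2,3) unfolding parts_def by auto
  with polestar_systemD(2)[OF assms(1)] assms(4) have "S = S'"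
    unfolding is_partition_def by blast
  with polestar_systemD(3)[OF assms(1)] assms(2,3) show ?thesis by fastforce
qed

lemma polestar_holeD:
  assumes "polestar_system X A" "(S,H) \<in> A" "H \<noteq> {}"
  shows "(H,{}) \<in> A" "\<exists>!q. q \<in> A \<and> q \<noteq> (S,H) \<and> snd q = H"
proof -
  have "case (S,H) of (S,H) \<Rightarrow>
      H \<noteq> {} \<longrightarrow> (H,{}) \<in> A \<and> (\<exists>!q. q \<in> A \<and> q \<noteq> (S,H) \<and> snd q = H)"
    using polestar_systemD(4)[OF assms(1)] assms(2) by (rule bspec)
  with assms(3) show "(H,{}) \<in> A" "\<exists>!q. q \<in> A \<and> q \<noteq> (S,H) \<and> snd q = H" by simp_all
qed

lemma polestar_hole_in:
  assumes "polestar_system X A" "(S,H) \<in> A" "H \<noteq> {}"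
  shows "(H,{}) \<in> A"
  using polestar_holeD(1)[OF assms] .

lemma polestar_hole_twin:
  assumes "polestar_system X A" "(S,H) \<in> A" "H \<noteq> {}"
  obtains S' where "S' \<noteq> S" "(S',H) \<in> A"
proof -
  obtain q where "q \<in> A" "q \<noteq> (S,H)" "snd q = H"
    using polestar_holeD(2)[OF assms] by blast
  then show thesis using that by (cases q) simp
qed

lemma polestar_hole_at_most_two:
  assumes "polestar_system X A" "(S1,H) \<in> A" "(S2,H) \<in> A" "(S3,H) \<in> A" "H \<noteq> {}"
  shows "S1 = S2 \<or> S1 = S3 \<or> S2 = S3"
proof (rule ccontr)
  assume distinct: "\<not> ?thesis"
  obtain q where "q \<in> A \<and> q \<noteq> (S1,H) \<and> snd q = H"
    and unique: "\<forall>y. y \<in> A \<and> y \<noteq> (S1,H) \<and> snd y = H \<longrightarrow> y = q"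
    using polestar_holeD(2)[OF assms(1,2,5)] by (rule ex1E)
  have "(S2,H) = q" using unique[rule_format, of "(S2,H)"] assms(3) distinct by fastforce
  moreover have "(S3,H) = q" using unique[rule_format, of "(S3,H)"] assms(4) distinct by fastforce
  ultimately have "S2 = S3" by (metis prod.inject)
  with distinct show False by simp
qed

lemma polestar_covers:
  assumes "polestar_system X A" "x \<in> X"
  obtains S H where "(S,H) \<in> A" "x \<in> S"
proof -
  have "x \<in> \<Union>(parts A)"
    using polestar_systemD(2)[OF assms(1)] assms(2) unfolding is_partition_def by simp
  then show thesis using that unfolding parts_def by blast
qed

lemma polestar_systemI:
  assumes pairs: "\<And>S H. (S,H) \<in> C \<Longrightarrow> S \<subseteq> X \<and> H \<subseteq> X \<and> S \<noteq> {} \<and> S \<inter> H = {}"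
    and covers: "\<And>x. x \<in> X \<Longrightarrow> \<exists>S H. (S,H) \<in> C \<and> x \<in> S"
    and overlap: "\<And>S H S' H'. (S,H) \<in> C \<Longrightarrow> (S',H') \<in> C \<Longrightarrow> S \<inter> S' \<noteq> {} \<Longrightarrow> S = S' \<and> H = H'"
    and hole_in: "\<And>S H. (S,H) \<in> C \<Longrightarrow> H \<noteq> {} \<Longrightarrow> (H,{}) \<in> C"
    and hole_twin: "\<And>S H. (S,H) \<in> C \<Longrightarrow> H \<noteq> {} \<Longrightarrow> \<exists>S'. S' \<noteq> S \<and> (S',H) \<in> C"
    and hole_at_most_two: "\<And>S1 S2 S3 H. (S1,H) \<in> C \<Longrightarrow> (S2,H) \<in> C \<Longrightarrow> (S3,H) \<in> C \<Longrightarrow> H \<noteq> {}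
      \<Longrightarrow> S1 = S2 \<or> S1 = S3 \<or> S2 = S3"
  shows "polestar_system X C"
  unfolding polestar_system_def
proof (intro conjI)
  show "set_pair_system X C"
    unfolding set_pair_system_def using pairs by blast
  show "is_partition X (parts C)"
    unfolding is_partition_def parts_def
  proof (intro conjI)
    show "\<Union>{S. \<exists>H. (S,H) \<in> C} = X" using pairs covers by blast
  qed (use pairs overlap in blast)+
  show "\<forall>p\<in>C. \<forall>q\<in>C. p \<noteq> q \<longrightarrow> fst p \<noteq> fst q"
  proof (intro ballI impI notI)
    fix p q assume "p \<in> C" "q \<in> C" "p \<noteq> q" "fst p = fst q"
    moreover obtain S H S' H' where pq: "p = (S,H)" "q = (S',H')" by fastforce
    ultimately have "(S,H) \<in> C" "(S',H') \<in> C" "S = S'" "H \<noteq> H'" by auto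
    moreover have "S \<inter> S' \<noteq> {}" using pairs[OF \<open>(S,H) \<in> C\<close>] \<open>S = S'\<close> by simp
    ultimately show False using overlap by blast
  qed
  show "\<forall>(S,H)\<in>C. H \<noteq> {} \<longrightarrow> (H,{}) \<in> C \<and> (\<exists>!q. q \<in> C \<and> q \<noteq> (S,H) \<and> snd q = H)"
  proof (clarify, intro conjI)
    fix S H assume SH: "(S,H) \<in> C" and "H \<noteq> {}"
    then show "(H,{}) \<in> C" by (rule hole_in)
    obtain S' where S': "S' \<noteq> S" "(S',H) \<in> C" using hole_twin[OF SH \<open>H \<noteq> {}\<close>] by blast
    show "\<exists>!q. q \<in> C \<and> q \<noteq> (S,H) \<and> snd q = H"
    proof (rule ex1I[of _ "(S',H)"])
      show "(S',H) \<in> C \<and> (S',H) \<noteq> (S,H) \<and> snd (S',H) = H" using S' by simp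
    next
      fix q assume q: "q \<in> C \<and> q \<noteq> (S,H) \<and> snd q = H"
      then have "(fst q, H) \<in> C" "fst q \<noteq> S" by (metis prod.collapse, auto)
      with hole_at_most_two[OF SH S'(2) _ \<open>H \<noteq> {}\<close>] S'(1) q show "q = (S',H)"
        by (metis prod.collapse)
    qed
  qed
qed

lemma polestar_subset_Pow: "polestar_system X A \<Longrightarrow> A \<subseteq> Pow X \<times> Pow X"
  using polestar_pairD by fast

lemma finite_polestars:
  assumes "finite X" shows "finite (polestars X)"
proof (rule finite_subset)
  show "polestars X \<subseteq> Pow (Pow X \<times> Pow X)"
    unfolding polestars_def using polestar_subset_Pow by blast
qed (simp add: assms)

lemma finite_parts:
  assumes "finite X" "polestar_system X A" shows "finite (parts A)"
proof (rule finite_subset)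
  show "parts A \<subseteq> Pow X" unfolding parts_def using polestar_pairD(1)[OF assms(2)] by blast
qed (simp add: assms)

lemma finite_holes:
  assumes "finite X" "polestar_system X A" shows "finite (holes A)"
proof (rule finite_subset)
  show "holes A \<subseteq> Pow X" unfolding holes_def using polestar_pairD(2)[OF assms(2)] by blast
qed (simp add: assms)

lemma card_parts_le:
  assumes "finite X" "polestar_system X A"
  shows "card (parts A) \<le> card X"
proof (rule card_inj_on_le)
  have some_in: "(SOME x. x \<in> S) \<in> S" if "S \<in> parts A" for S
    using that polestar_pairD(3)[OF assms(2)] unfolding parts_def some_in_eq by blast
  show "inj_on (\<lambda>S. SOME x. x \<in> S) (parts A)"
  proof (rule inj_onI)
    fix S S' assume in_parts: "S \<in> parts A" "S' \<in> parts A"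
      and "(SOME x. x \<in> S) = (SOME x. x \<in> S')"
    then have "S \<inter> S' \<noteq> {}" using some_in by (metis IntI empty_iff)
    moreover obtain H H' where "(S,H) \<in> A" "(S',H') \<in> A" using in_parts unfolding parts_def by blast
    ultimately show "S = S'" using polestar_overlap[OF assms(2)] by blast
  qed
  show "(\<lambda>S. SOME x. x \<in> S) ` parts A \<subseteq> X"
    using some_in polestar_pairD(1)[OF assms(2)] unfolding parts_def by blast
qed (rule assms(1))

lemma in_partsI: "(S,H) \<in> A \<Longrightarrow> S \<in> parts A"
  unfolding parts_def by blast

lemma in_holesI: "(S,H) \<in> A \<Longrightarrow> H \<noteq> {} \<Longrightarrow> H \<in> holes A"
  unfolding holes_def by blast

definition polestar_le :: "'a sps \<Rightarrow> 'a sps \<Rightarrow> bool" where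
  "polestar_le A B \<longleftrightarrow>
     (\<forall>S H. (S,H) \<in> A \<longrightarrow> (\<exists>T K. (T,K) \<in> B \<and> S \<subseteq> T \<and> (H \<subseteq> T \<or> K = H))) \<and>
     (\<forall>T K S. (T,K) \<in> B \<longrightarrow> K \<noteq> {} \<longrightarrow> (S,K) \<in> A \<longrightarrow> (\<exists>S'. (S',K) \<in> A \<and> S' \<subseteq> T))"

lemma polestar_leI:
  assumes "\<And>S H. (S,H) \<in> A \<Longrightarrow> \<exists>T K. (T,K) \<in> B \<and> S \<subseteq> T \<and> (H \<subseteq> T \<or> K = H)"
    and "\<And>T K S. (T,K) \<in> B \<Longrightarrow> K \<noteq> {} \<Longrightarrow> (S,K) \<in> A \<Longrightarrow> \<exists>S'. (S',K) \<in> A \<and> S' \<subseteq> T"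
  shows "polestar_le A B"
  unfolding polestar_le_def by (intro conjI allI impI) (erule assms(1), erule (2) assms(2))

lemma polestar_le_partD:
  assumes "polestar_le A B" "(S,H) \<in> A"
  obtains T K where "(T,K) \<in> B" "S \<subseteq> T" "H \<subseteq> T \<or> K = H"
proof -
  have "\<exists>T K. (T,K) \<in> B \<and> S \<subseteq> T \<and> (H \<subseteq> T \<or> K = H)"
    using assms(2) by (rule assms(1)[unfolded polestar_le_def, THEN conjunct1, rule_format])
  then show thesis using that by blast
qed

lemma polestar_le_holeD:
  assumes "polestar_le A B" "(T,K) \<in> B" "K \<noteq> {}" "(S,K) \<in> A"
  obtains S' where "(S',K) \<in> A" "S' \<subseteq> T"
proof -
  have "\<exists>S'. (S',K) \<in> A \<and> S' \<subseteq> T"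
    using assms(2-4) by (rule assms(1)[unfolded polestar_le_def, THEN conjunct2, rule_format])
  then show thesis using that by blast
qed

lemma sps_le_iff_pairwise:
  "sps_le A B \<longleftrightarrow>
     (\<forall>S H. (S,H) \<in> A \<longrightarrow> (\<exists>T K. (T,K) \<in> B \<and> sp_le (S,H) (T,K))) \<and>
     (\<forall>T K S. (T,K) \<in> B \<longrightarrow> K \<noteq> {} \<longrightarrow> (S,K) \<in> A \<longrightarrow> (\<exists>S'. (S',K) \<in> A \<and> sp_le (S',K) (T,K)))"
  unfolding sps_le_def by (simp add: Ball_def Bex_def split_paired_all split_paired_Ex)

lemma sp_le_pair:
  "sp_le (S,H) (T,K) \<longleftrightarrow> (S,H) = (T,K) \<or> S \<union> H \<subseteq> T \<or> S \<union> H \<subseteq> K \<or> (S \<subset> T \<and> H = K \<and> K \<noteq> {})"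
  unfolding sp_le_def by simp

text \<open>On polestar systems \<open>sps_le\<close> is the simpler relation \<open>polestar_le\<close>: a pair lying inside
  a hole \<open>K\<close> of \<open>B\<close> also lies inside the part \<open>(K,{})\<close> of \<open>B\<close>, and the remaining cases of
  \<open>sp_le\<close> collapse because parts are non-empty and disjoint from their holes.\<close>

lemma sps_le_iff_polestar_le:
  assumes A: "polestar_system X A" and B: "polestar_system X B"
  shows "sps_le A B \<longleftrightarrow> polestar_le A B"
proof
  assume le: "sps_le A B"
  show "polestar_le A B"
  proof (rule polestar_leI)
    fix S H assume SH: "(S,H) \<in> A"
    then obtain T K where TK: "(T,K) \<in> B" "sp_le (S,H) (T,K)"
      using le unfolding sps_le_iff_pairwise by blast
    show "\<exists>T K. (T,K) \<in> B \<and> S \<subseteq> T \<and> (H \<subseteq> T \<or> K = H)"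
    proof (cases "S \<union> H \<subseteq> K")
      case True
      with polestar_pairD(3)[OF A SH] have "K \<noteq> {}" by blast
      with polestar_hole_in[OF B TK(1)] True show ?thesis by blast
    next
      case False
      with TK show ?thesis unfolding sp_le_pair by blast
    qed
  next
    fix T K S assume "(T,K) \<in> B" "K \<noteq> {}" "(S,K) \<in> A"
    then obtain S' where S': "(S',K) \<in> A" "sp_le (S',K) (T,K)"
      using le unfolding sps_le_iff_pairwise by blast
    with polestar_pairD(3,4)[OF A S'(1)] have "S' \<subseteq> T" unfolding sp_le_pair by blast
    with S'(1) show "\<exists>S'. (S',K) \<in> A \<and> S' \<subseteq> T" by blast
  qed
next
  assume le: "polestar_le A B"
  show "sps_le A B"
    unfolding sps_le_iff_pairwise sp_le_pair
  proof (intro conjI allI impI)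
    fix S H assume "(S,H) \<in> A"
    with le obtain T K where "(T,K) \<in> B" "S \<subseteq> T" "H \<subseteq> T \<or> K = H"
      by (rule polestar_le_partD)
    then show "\<exists>T K. (T,K) \<in> B \<and> ((S,H) = (T,K) \<or> S \<union> H \<subseteq> T \<or> S \<union> H \<subseteq> K \<or>
        (S \<subset> T \<and> H = K \<and> K \<noteq> {}))"
      by (cases "S = T") auto
  next
    fix T K S assume "(T,K) \<in> B" "K \<noteq> {}" "(S,K) \<in> A"
    with le obtain S' where "(S',K) \<in> A" "S' \<subseteq> T" by (rule polestar_le_holeD)
    then show "\<exists>S'. (S',K) \<in> A \<and> ((S',K) = (T,K) \<or> S' \<union> K \<subseteq> T \<or> S' \<union> K \<subseteq> K \<or>
        (S' \<subset> T \<and> K = K \<and> K \<noteq> {}))"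
      using \<open>K \<noteq> {}\<close> by (cases "S' = T") auto
  qed
qed

lemma polestar_le_refl: "polestar_le A A"
  by (rule polestar_leI) blast+

lemma polestar_le_antisym:
  assumes A: "polestar_system X A" and B: "polestar_system X B"
    and AB: "polestar_le A B" and BA: "polestar_le B A"
  shows "A = B"
proof -
  have "A' \<subseteq> B'" if A': "polestar_system X A'" and B': "polestar_system X B'"
    and AB': "polestar_le A' B'" and BA': "polestar_le B' A'" for A' B'
  proof (rule subsetI)
    fix p assume "p \<in> A'"
    then obtain S H where p: "p = (S,H)" and SH: "(S,H) \<in> A'" by (cases p) auto
    obtain T K where TK: "(T,K) \<in> B'" "S \<subseteq> T" "H \<subseteq> T \<or> K = H"
      using AB' SH by (rule polestar_le_partD)
    obtain S' H' where S'H': "(S',H') \<in> A'" "T \<subseteq> S'" "K \<subseteq> S' \<or> H' = K"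
      using BA' TK(1) by (rule polestar_le_partD)
    have S: "S \<noteq> {}" "S \<inter> H = {}" using polestar_pairD(3,4)[OF A' SH] .
    with TK(2) S'H'(2) have "S \<inter> S' \<noteq> {}" by blast
    then have "S' = S" "H' = H" using polestar_overlap[OF A' S'H'(1) SH] by auto
    with TK(2) S'H'(2) have "T = S" by blast
    have "T \<inter> K = {}" using polestar_pairD(4)[OF B' TK(1)] .
    with S'H'(3) \<open>S' = S\<close> \<open>T = S\<close> \<open>H' = H\<close> have "K = {} \<or> K = H" by blast
    moreover have "H \<subseteq> T \<Longrightarrow> H = {}" using S(2) \<open>T = S\<close> by blast
    ultimately have "K = H" using TK(3) by blast
    with TK(1) \<open>T = S\<close> p show "p \<in> B'" by simp
  qed
  from this[OF A B AB BA] this[OF B A BA AB] show ?thesis ..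
qed

lemma polestar_le_trans:
  assumes A: "polestar_system X A" and C: "polestar_system X C"
    and AB: "polestar_le A B" and BC: "polestar_le B C"
  shows "polestar_le A C"
proof (rule polestar_leI)
  fix S H assume "(S,H) \<in> A"
  with AB obtain T K where TK: "(T,K) \<in> B" "S \<subseteq> T" "H \<subseteq> T \<or> K = H"
    by (rule polestar_le_partD)
  obtain U L where "(U,L) \<in> C" "T \<subseteq> U" "K \<subseteq> U \<or> L = K"
    using BC TK(1) by (rule polestar_le_partD)
  with TK show "\<exists>U L. (U,L) \<in> C \<and> S \<subseteq> U \<and> (H \<subseteq> U \<or> L = H)" by blast
next
  fix U L S assume UL: "(U,L) \<in> C" "L \<noteq> {}" and SL: "(S,L) \<in> A"
  obtain T K where TK: "(T,K) \<in> B" "S \<subseteq> T" "L \<subseteq> T \<or> K = L"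
    using AB SL by (rule polestar_le_partD)
  show "\<exists>S'. (S',L) \<in> A \<and> S' \<subseteq> U"
  proof (cases "K = L")
    case True
    obtain T' where T': "(T',L) \<in> B" "T' \<subseteq> U"
      using BC UL TK(1)[unfolded True] by (rule polestar_le_holeD)
    obtain S' where "(S',L) \<in> A" "S' \<subseteq> T'"
      using AB T'(1) UL(2) SL by (rule polestar_le_holeD)
    with T'(2) show ?thesis by blast
  next
    case False
    txt \<open>Then the hole \<open>L\<close> lies inside the part \<open>T\<close> of \<open>B\<close>, so \<open>T\<close> lies inside the part \<open>L\<close>
      of \<open>C\<close>; but \<open>S \<subseteq> T\<close> is disjoint from \<open>L\<close>.\<close>
    then have "L \<subseteq> T" using TK(3) by blast
    obtain U' L' where U': "(U',L') \<in> C" "T \<subseteq> U'"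
      using BC TK(1) by (rule polestar_le_partD)
    have "(L,{}) \<in> C" using polestar_hole_in[OF C UL] .
    moreover have "L \<inter> U' \<noteq> {}" using \<open>L \<subseteq> T\<close> U'(2) UL(2) by blast
    ultimately have "L = U'" using polestar_overlap[OF C _ U'(1)] by blast
    with TK(2) U'(2) have "S \<subseteq> L" by blast
    with polestar_pairD(3,4)[OF A SL] show ?thesis by blast
  qed
qed

lemma polestar_system_singletons: "polestar_system X {({x},{}) | x. x \<in> X}"
  by (rule polestar_systemI) auto

lemma polestar_system_whole: "X \<noteq> {} \<Longrightarrow> polestar_system X {(X,{})}"
  by (rule polestar_systemI) auto

lemma singletons_polestar_le:
  assumes "polestar_system X A"
  shows "polestar_le {({x},{}) | x. x \<in> X} A"
proof (rule polestar_leI)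
  fix S H :: "'a set" assume "(S,H) \<in> {({x},{}) | x. x \<in> X}"
  then obtain x where x: "S = {x}" "H = {}" "x \<in> X" by blast
  obtain T K where "(T,K) \<in> A" "x \<in> T" using polestar_covers[OF assms x(3)] .
  with x show "\<exists>T K. (T,K) \<in> A \<and> S \<subseteq> T \<and> (H \<subseteq> T \<or> K = H)" by blast
qed auto

lemma polestar_le_whole:
  assumes "polestar_system X A"
  shows "polestar_le A {(X,{})}"
  by (rule polestar_leI) (use polestar_pairD(1,2)[OF assms] in auto)

definition polestar_rank :: "'a set \<Rightarrow> 'a sps \<Rightarrow> nat" where
  "polestar_rank X A = card X - card (parts A) + card (holes A)"

lemma polestar_rank_singletons:
  assumes "finite X" shows "polestar_rank X {({x},{}) | x. x \<in> X} = 0"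
proof -
  have "parts {({x},{}) | x. x \<in> X} = (\<lambda>x. {x}) ` X" unfolding parts_def by auto
  moreover have "holes {({x},{}) | x. x \<in> X} = {}" unfolding holes_def by auto
  ultimately show ?thesis unfolding polestar_rank_def by (simp add: card_image)
qed

lemma polestar_rank_whole: "polestar_rank X {(X,{})} = card X - 1"
proof -
  have "parts {(X,{})} = {X}" "holes {(X,{})} = {}" unfolding parts_def holes_def by auto
  then show ?thesis unfolding polestar_rank_def by simp
qed

section \<open>Elementary moves\<close>

lemma card_insert_Diff:
  assumes "finite F" "D \<subseteq> F" "x \<notin> F - D"
  shows "card (insert x (F - D)) = Suc (card F - card D)"
  using assms by (simp add: card_Diff_subset finite_subset)

definition merge_parts :: "'a sps \<Rightarrow> 'a set \<Rightarrow> 'a set \<Rightarrow> 'a set \<Rightarrow> 'a sps" where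
  "merge_parts A P H Q = insert (P \<union> Q, H) (A - {(P,H), (Q,{})})"

context
  fixes X :: "'a set" and A :: "'a sps" and P H Q :: "'a set"
  assumes A: "polestar_system X A" and P_in: "(P,H) \<in> A" and Q_in: "(Q,{}) \<in> A"
    and P_ne_Q: "P \<noteq> Q" and P_not_hole: "\<And>S. (S,P) \<notin> A" and Q_not_hole: "\<And>S. (S,Q) \<notin> A"
begin

private lemma hole_of_P: "(P,K) \<in> A \<Longrightarrow> K = H"
  using polestar_overlap[OF A _ P_in] polestar_pairD(3)[OF A P_in] by auto

private lemma hole_of_Q: "(Q,K) \<in> A \<Longrightarrow> K = {}"
  using polestar_overlap[OF A _ Q_in] polestar_pairD(3)[OF A Q_in] by auto

private lemma Q_disj_H: "Q \<inter> H = {}"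
proof (rule ccontr)
  assume "Q \<inter> H \<noteq> {}"
  then have "H \<noteq> {}" by blast
  with polestar_hole_in[OF A P_in] \<open>Q \<inter> H \<noteq> {}\<close> have "Q = H"
    using polestar_overlap[OF A Q_in] by blast
  with P_in Q_not_hole show False by blast
qed

private lemma meets_merged: "(S,K) \<in> A \<Longrightarrow> S \<inter> (P \<union> Q) \<noteq> {} \<Longrightarrow> S = P \<or> S = Q"
  using polestar_overlap[OF A _ P_in] polestar_overlap[OF A _ Q_in] by blast

private lemma merged_not_old: "(S,K) \<in> A \<Longrightarrow> S \<noteq> P \<Longrightarrow> S \<noteq> Q \<Longrightarrow> S \<noteq> P \<union> Q"
  using meets_merged polestar_pairD(3)[OF A P_in] by blast

lemma merge_parts_iff:
  "(S,K) \<in> merge_parts A P H Q \<longleftrightarrow> (S = P \<union> Q \<and> K = H) \<or> ((S,K) \<in> A \<and> S \<noteq> P \<and> S \<noteq> Q)"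
  unfolding merge_parts_def using hole_of_P hole_of_Q by auto

lemma merge_partsE:
  assumes "(S,K) \<in> merge_parts A P H Q"
  obtains "S = P \<union> Q" "K = H" | "(S,K) \<in> A" "S \<noteq> P" "S \<noteq> Q"
  using assms merge_parts_iff by blast

private lemma merge_parts_keeps_hole:
  assumes "(S,K) \<in> A" "K \<noteq> {}"
  obtains S' where "(S',K) \<in> merge_parts A P H Q" "S \<subseteq> S'"
proof (cases "S = P")
  case True
  with assms(1) hole_of_P have "K = H" by blast
  then have "(P \<union> Q, K) \<in> merge_parts A P H Q" by (simp add: merge_parts_iff)
  with True show thesis using that by blast
next
  case False
  from assms hole_of_Q have "S \<noteq> Q" by blast
  with assms(1) False have "(S,K) \<in> merge_parts A P H Q" by (simp add: merge_parts_iff)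
  then show thesis using that by blast
qed

private lemma merge_parts_pairs:
  assumes "(S,K) \<in> merge_parts A P H Q"
  shows "S \<subseteq> X \<and> K \<subseteq> X \<and> S \<noteq> {} \<and> S \<inter> K = {}"
  using assms
proof (cases rule: merge_partsE)
  case 1
  have "P \<union> Q \<subseteq> X" "(P \<union> Q) \<inter> H = {}"
    using polestar_pairD(1,4)[OF A P_in] polestar_pairD(1)[OF A Q_in] Q_disj_H by auto
  with 1 polestar_pairD(2,3)[OF A P_in] show ?thesis by simp
next
  case 2
  then show ?thesis using polestar_pairD[OF A 2(1)] by simp
qed

private lemma merge_parts_covers:
  assumes "x \<in> X" shows "\<exists>S K. (S,K) \<in> merge_parts A P H Q \<and> x \<in> S"
proof -
  obtain S K where SK: "(S,K) \<in> A" "x \<in> S" using polestar_covers[OF A assms] .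
  show ?thesis
  proof (cases "S = P \<or> S = Q")
    case True
    have "(P \<union> Q, H) \<in> merge_parts A P H Q" by (simp add: merge_parts_iff)
    with True SK(2) show ?thesis by blast
  next
    case False
    with SK have "(S,K) \<in> merge_parts A P H Q" by (simp add: merge_parts_iff)
    with SK(2) show ?thesis by blast
  qed
qed

private lemma merge_parts_overlap:
  assumes SK: "(S,K) \<in> merge_parts A P H Q" and S'K': "(S',K') \<in> merge_parts A P H Q"
    and meet: "S \<inter> S' \<noteq> {}"
  shows "S = S' \<and> K = K'"
  using SK
proof (cases rule: merge_partsE)
  case new: 1
  from S'K' show ?thesis
  proof (cases rule: merge_partsE)
    case old: 2
    with new meet have "S' \<inter> (P \<union> Q) \<noteq> {}" by blast
    with meets_merged old show ?thesis by blast
  qed (use new in simp)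
next
  case old: 2
  from S'K' show ?thesis
  proof (cases rule: merge_partsE)
    case new: 1
    with old meet have "S \<inter> (P \<union> Q) \<noteq> {}" by blast
    with meets_merged old show ?thesis by blast
  qed (use old polestar_overlap[OF A _ _ meet] in blast)
qed

private lemma merge_parts_hole_in:
  assumes SK: "(S,K) \<in> merge_parts A P H Q" and "K \<noteq> {}"
  shows "(K,{}) \<in> merge_parts A P H Q"
  using SK
proof (cases rule: merge_partsE)
  case 1
  with \<open>K \<noteq> {}\<close> have "(H,{}) \<in> A" using polestar_hole_in[OF A P_in] by simp
  moreover have "H \<noteq> P" using polestar_pairD(3,4)[OF A P_in] by blast
  moreover have "H \<noteq> Q" using Q_disj_H 1 \<open>K \<noteq> {}\<close> by blast
  ultimately show ?thesis using 1 by (simp add: merge_parts_iff)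
next
  case 2
  then have "(K,{}) \<in> A" "K \<noteq> P" "K \<noteq> Q"
    using polestar_hole_in[OF A _ \<open>K \<noteq> {}\<close>] P_not_hole Q_not_hole by blast+
  then show ?thesis by (simp add: merge_parts_iff)
qed

private lemma merge_parts_hole_twin:
  assumes SK: "(S,K) \<in> merge_parts A P H Q" and "K \<noteq> {}"
  shows "\<exists>S'. S' \<noteq> S \<and> (S',K) \<in> merge_parts A P H Q"
  using SK
proof (cases rule: merge_partsE)
  case 1
  with \<open>K \<noteq> {}\<close> obtain S' where S': "S' \<noteq> P" "(S',H) \<in> A"
    using polestar_hole_twin[OF A P_in] by blast
  moreover from S'(2) hole_of_Q 1 \<open>K \<noteq> {}\<close> have "S' \<noteq> Q" by blast
  ultimately have "(S',K) \<in> merge_parts A P H Q" "S' \<noteq> S"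
    using merged_not_old 1 by (simp_all add: merge_parts_iff)
  then show ?thesis by blast
next
  case 2
  obtain S' where S': "S' \<noteq> S" "(S',K) \<in> A" using polestar_hole_twin[OF A 2(1) \<open>K \<noteq> {}\<close>] .
  then obtain S'' where S'': "(S'',K) \<in> merge_parts A P H Q" "S' \<subseteq> S''"
    using merge_parts_keeps_hole \<open>K \<noteq> {}\<close> by blast
  have "S'' \<noteq> S"
  proof
    assume "S'' = S"
    with S''(2) polestar_pairD(3)[OF A S'(2)] have "S' \<inter> S \<noteq> {}" by blast
    with polestar_overlap[OF A S'(2) 2(1)] S'(1) show False by blast
  qed
  with S''(1) show ?thesis by blast
qed

private lemma merge_parts_hole_at_most_two:
  assumes in_C: "(S1,K) \<in> merge_parts A P H Q" "(S2,K) \<in> merge_parts A P H Q"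
    "(S3,K) \<in> merge_parts A P H Q" and "K \<noteq> {}"
  shows "S1 = S2 \<or> S1 = S3 \<or> S2 = S3"
proof -
  txt \<open>Pull the three pairs back to \<open>A\<close> by sending the merged part back to \<open>P\<close>.\<close>
  define g where "g S = (if S = P \<union> Q then P else S)" for S
  have g_in: "(g S, K) \<in> A" if "(S,K) \<in> merge_parts A P H Q" for S
    using that by (cases rule: merge_partsE) (simp_all add: P_in g_def merged_not_old)
  have g_inj: "S = S'"
    if "g S = g S'" "(S,K) \<in> merge_parts A P H Q" "(S',K) \<in> merge_parts A P H Q" for S S'
    using that merged_not_old unfolding g_def merge_parts_iff by (auto split: if_splits)
  have "g S1 = g S2 \<or> g S1 = g S3 \<or> g S2 = g S3"
    using polestar_hole_at_most_two[OF A g_in[OF in_C(1)] g_in[OF in_C(2)] g_in[OF in_C(3)] \<open>K \<noteq> {}\<close>] .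
  with g_inj in_C show ?thesis by blast
qed

lemma polestar_system_merge_parts: "polestar_system X (merge_parts A P H Q)"
  by (rule polestar_systemI) (fact merge_parts_pairs merge_parts_covers merge_parts_overlap
      merge_parts_hole_in merge_parts_hole_twin merge_parts_hole_at_most_two)+

lemma polestar_le_merge_parts: "polestar_le A (merge_parts A P H Q)"
proof (rule polestar_leI)
  fix S K assume SK: "(S,K) \<in> A"
  have new: "(P \<union> Q, H) \<in> merge_parts A P H Q" by (simp add: merge_parts_iff)
  show "\<exists>T K'. (T,K') \<in> merge_parts A P H Q \<and> S \<subseteq> T \<and> (K \<subseteq> T \<or> K' = K)"
  proof (cases "S = P \<or> S = Q")
    case True
    with SK hole_of_P hole_of_Q have "K = H \<or> K = {}" by blast
    with True new show ?thesis by blast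
  next
    case False
    with SK have "(S,K) \<in> merge_parts A P H Q" by (simp add: merge_parts_iff)
    then show ?thesis by blast
  qed
next
  fix T K S assume "(T,K) \<in> merge_parts A P H Q"
  then show "\<exists>S'. (S',K) \<in> A \<and> S' \<subseteq> T"
    by (cases rule: merge_partsE) (use P_in in blast)+
qed

lemma merge_parts_le:
  assumes B: "polestar_system X B" and AB: "polestar_le A B"
    and U: "(U,L) \<in> B" "P \<subseteq> U" "Q \<subseteq> U"
  shows "polestar_le (merge_parts A P H Q) B"
proof -
  have P_ne: "P \<noteq> {}" using polestar_pairD(3)[OF A P_in] .
  have part_of_P: "T = U" if "(T,K) \<in> B" "P \<subseteq> T" for T K
    using polestar_overlap[OF B that(1) U(1)] that(2) U(2) P_ne by blast
  show ?thesis
  proof (rule polestar_leI)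
    fix S K assume "(S,K) \<in> merge_parts A P H Q"
    then show "\<exists>T K'. (T,K') \<in> B \<and> S \<subseteq> T \<and> (K \<subseteq> T \<or> K' = K)"
    proof (cases rule: merge_partsE)
      case 1
      obtain T K' where "(T,K') \<in> B" "P \<subseteq> T" "H \<subseteq> T \<or> K' = H"
        using AB P_in by (rule polestar_le_partD)
      with part_of_P U 1 show ?thesis by blast
    next
      case 2
      obtain T K' where "(T,K') \<in> B" "S \<subseteq> T" "K \<subseteq> T \<or> K' = K"
        using AB 2(1) by (rule polestar_le_partD)
      then show ?thesis by blast
    qed
  next
    fix T K S assume TK: "(T,K) \<in> B" "K \<noteq> {}" and SK: "(S,K) \<in> merge_parts A P H Q"
    from SK obtain S0 where "(S0,K) \<in> A" by (cases rule: merge_partsE) (use P_in in blast)+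
    with AB TK obtain S' where S': "(S',K) \<in> A" "S' \<subseteq> T" by (rule polestar_le_holeD)
    show "\<exists>S'. (S',K) \<in> merge_parts A P H Q \<and> S' \<subseteq> T"
    proof (cases "S' = P")
      case True
      with S' hole_of_P have "K = H" by blast
      then have "(P \<union> Q, K) \<in> merge_parts A P H Q" by (simp add: merge_parts_iff)
      moreover have "P \<union> Q \<subseteq> T" using part_of_P[OF TK(1)] S'(2) True U by blast
      ultimately show ?thesis by blast
    next
      case False
      with S' hole_of_Q TK(2) have "(S',K) \<in> merge_parts A P H Q" by (auto simp: merge_parts_iff)
      with S'(2) show ?thesis by blast
    qed
  qed
qed

lemma parts_merge_parts: "parts (merge_parts A P H Q) = insert (P \<union> Q) (parts A - {P,Q})"
  unfolding parts_def merge_parts_iff using P_in Q_in by blast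

lemma holes_merge_parts: "holes (merge_parts A P H Q) = holes A"
proof
  show "holes (merge_parts A P H Q) \<subseteq> holes A"
    unfolding holes_def merge_parts_iff using P_in by blast
  show "holes A \<subseteq> holes (merge_parts A P H Q)"
    unfolding holes_def using merge_parts_keeps_hole by blast
qed

lemma polestar_rank_merge_parts:
  assumes "finite X"
  shows "polestar_rank X (merge_parts A P H Q) = Suc (polestar_rank X A)"
proof -
  have P_Q: "P \<in> parts A" "Q \<in> parts A" using P_in Q_in by (blast intro: in_partsI)+
  have "P \<inter> Q = {}" using polestar_overlap[OF A P_in Q_in] P_ne_Q by blast
  then have "P \<union> Q \<noteq> P" "P \<union> Q \<noteq> Q"
    using polestar_pairD(3)[OF A P_in] polestar_pairD(3)[OF A Q_in] by blast+
  then have "P \<union> Q \<notin> parts A" using merged_not_old unfolding parts_def by blast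
  then have "card (parts (merge_parts A P H Q)) = Suc (card (parts A) - 2)"
    unfolding parts_merge_parts
    using card_insert_Diff[OF finite_parts[OF assms A], of "{P,Q}"] P_Q P_ne_Q by simp
  moreover have "2 \<le> card (parts A)"
    using card_mono[OF finite_parts[OF assms A], of "{P,Q}"] P_Q P_ne_Q by simp
  ultimately show ?thesis
    using card_parts_le[OF assms A] unfolding polestar_rank_def holes_merge_parts by simp
qed

end

definition fill_hole :: "'a sps \<Rightarrow> 'a set \<Rightarrow> 'a set \<Rightarrow> 'a set \<Rightarrow> 'a sps" where
  "fill_hole A S1 S2 H = insert (S1 \<union> S2 \<union> H, {}) (A - {(S1,H), (S2,H), (H,{})})"

context
  fixes X :: "'a set" and A :: "'a sps" and S1 S2 H :: "'a set"
  assumes A: "polestar_system X A" and S1_in: "(S1,H) \<in> A" and S2_in: "(S2,H) \<in> A"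
    and S1_ne_S2: "S1 \<noteq> S2" and H_ne: "H \<noteq> {}"
begin

private lemma H_in: "(H,{}) \<in> A"
  using polestar_hole_in[OF A S1_in H_ne] .

private lemma hole_of_S1: "(S1,K) \<in> A \<Longrightarrow> K = H"
  using polestar_overlap[OF A _ S1_in] polestar_pairD(3)[OF A S1_in] by auto

private lemma hole_of_S2: "(S2,K) \<in> A \<Longrightarrow> K = H"
  using polestar_overlap[OF A _ S2_in] polestar_pairD(3)[OF A S2_in] by auto

private lemma hole_of_H: "(H,K) \<in> A \<Longrightarrow> K = {}"
  using polestar_overlap[OF A _ H_in] H_ne by auto

private lemma satellites_ne_H: "S1 \<noteq> H" "S2 \<noteq> H"
  using polestar_pairD(3,4)[OF A S1_in] polestar_pairD(3,4)[OF A S2_in] by auto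

private lemma satellite_not_hole: "(S,S1) \<notin> A" "(S,S2) \<notin> A"
  using polestar_hole_in[OF A _ polestar_pairD(3)[OF A S1_in]]
    polestar_hole_in[OF A _ polestar_pairD(3)[OF A S2_in]] hole_of_S1 hole_of_S2 H_ne by blast+

private lemma other_hole: "(S,K) \<in> A \<Longrightarrow> S \<noteq> S1 \<Longrightarrow> S \<noteq> S2 \<Longrightarrow> K \<noteq> H"
  using polestar_hole_at_most_two[OF A S1_in S2_in _ H_ne] S1_ne_S2 by blast

private lemma meets_filled:
  assumes SK: "(S,K) \<in> A" and meet: "S \<inter> (S1 \<union> S2 \<union> H) \<noteq> {}"
  shows "S = S1 \<or> S = S2 \<or> S = H"
proof -
  from meet have "S \<inter> S1 \<noteq> {} \<or> S \<inter> S2 \<noteq> {} \<or> S \<inter> H \<noteq> {}" by blast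
  then show ?thesis
    using polestar_overlap[OF A SK S1_in] polestar_overlap[OF A SK S2_in]
      polestar_overlap[OF A SK H_in] by blast
qed

lemma fill_hole_iff:
  "(S,K) \<in> fill_hole A S1 S2 H \<longleftrightarrow>
     (S = S1 \<union> S2 \<union> H \<and> K = {}) \<or> ((S,K) \<in> A \<and> S \<noteq> S1 \<and> S \<noteq> S2 \<and> S \<noteq> H)"
proof -
  have "(S,K) \<in> A - {(S1,H), (S2,H), (H,{})} \<longleftrightarrow> (S,K) \<in> A \<and> S \<noteq> S1 \<and> S \<noteq> S2 \<and> S \<noteq> H"
    using hole_of_S1[of K] hole_of_S2[of K] hole_of_H[of K] by blast
  then show ?thesis unfolding fill_hole_def by simp
qed

lemma fill_holeE:
  assumes "(S,K) \<in> fill_hole A S1 S2 H"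
  obtains "S = S1 \<union> S2 \<union> H" "K = {}" | "(S,K) \<in> A" "S \<noteq> S1" "S \<noteq> S2" "S \<noteq> H"
proof -
  have "(S = S1 \<union> S2 \<union> H \<and> K = {}) \<or> ((S,K) \<in> A \<and> S \<noteq> S1 \<and> S \<noteq> S2 \<and> S \<noteq> H)"
    using assms by (simp only: fill_hole_iff)
  then show thesis using that by (elim disjE conjE) simp_all
qed

private lemma fill_hole_keeps_hole:
  assumes "(S,K) \<in> A" "K \<noteq> {}" "K \<noteq> H"
  shows "(S,K) \<in> fill_hole A S1 S2 H"
  using assms hole_of_S1 hole_of_S2 hole_of_H by (auto simp: fill_hole_iff)

private lemma fill_hole_pairs:
  assumes "(S,K) \<in> fill_hole A S1 S2 H"
  shows "S \<subseteq> X \<and> K \<subseteq> X \<and> S \<noteq> {} \<and> S \<inter> K = {}"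
  using assms
proof (cases rule: fill_holeE)
  case 1
  have "S1 \<union> S2 \<union> H \<subseteq> X" "S1 \<noteq> {}"
    using polestar_pairD(1,2,3)[OF A S1_in] polestar_pairD(1)[OF A S2_in] by auto
  with 1 show ?thesis by simp
next
  case 2
  then show ?thesis using polestar_pairD[OF A 2(1)] by simp
qed

private lemma fill_hole_covers:
  assumes "x \<in> X" shows "\<exists>S K. (S,K) \<in> fill_hole A S1 S2 H \<and> x \<in> S"
proof -
  obtain S K where SK: "(S,K) \<in> A" "x \<in> S" using polestar_covers[OF A assms] .
  show ?thesis
  proof (cases "S = S1 \<or> S = S2 \<or> S = H")
    case True
    have "(S1 \<union> S2 \<union> H, {}) \<in> fill_hole A S1 S2 H" by (simp add: fill_hole_iff)
    with True SK(2) show ?thesis by blast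
  next
    case False
    with SK have "(S,K) \<in> fill_hole A S1 S2 H" by (simp add: fill_hole_iff)
    with SK(2) show ?thesis by blast
  qed
qed

private lemma fill_hole_overlap:
  assumes SK: "(S,K) \<in> fill_hole A S1 S2 H" and S'K': "(S',K') \<in> fill_hole A S1 S2 H"
    and meet: "S \<inter> S' \<noteq> {}"
  shows "S = S' \<and> K = K'"
  using SK
proof (cases rule: fill_holeE)
  case new: 1
  from S'K' show ?thesis
  proof (cases rule: fill_holeE)
    case old: 2
    with new meet have "S' \<inter> (S1 \<union> S2 \<union> H) \<noteq> {}" by blast
    with meets_filled old show ?thesis by blast
  qed (use new in simp)
next
  case old: 2
  from S'K' show ?thesis
  proof (cases rule: fill_holeE)
    case new: 1
    with old meet have "S \<inter> (S1 \<union> S2 \<union> H) \<noteq> {}" by blast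
    with meets_filled old show ?thesis by blast
  qed (use old polestar_overlap[OF A _ _ meet] in blast)
qed

private lemma fill_hole_hole_in:
  assumes SK: "(S,K) \<in> fill_hole A S1 S2 H" and "K \<noteq> {}"
  shows "(K,{}) \<in> fill_hole A S1 S2 H"
proof -
  from SK \<open>K \<noteq> {}\<close> have old: "(S,K) \<in> A" "S \<noteq> S1" "S \<noteq> S2" by (auto elim: fill_holeE)
  then have "(K,{}) \<in> A" "K \<noteq> S1" "K \<noteq> S2" "K \<noteq> H"
    using polestar_hole_in[OF A _ \<open>K \<noteq> {}\<close>] satellite_not_hole other_hole by blast+
  then show ?thesis by (simp add: fill_hole_iff)
qed

private lemma fill_hole_hole_twin:
  assumes SK: "(S,K) \<in> fill_hole A S1 S2 H" and "K \<noteq> {}"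
  shows "\<exists>S'. S' \<noteq> S \<and> (S',K) \<in> fill_hole A S1 S2 H"
proof -
  from SK \<open>K \<noteq> {}\<close> have old: "(S,K) \<in> A" "S \<noteq> S1" "S \<noteq> S2" by (auto elim: fill_holeE)
  obtain S' where "S' \<noteq> S" "(S',K) \<in> A" using polestar_hole_twin[OF A old(1) \<open>K \<noteq> {}\<close>] .
  moreover have "K \<noteq> H" using other_hole old by blast
  ultimately show ?thesis using fill_hole_keeps_hole \<open>K \<noteq> {}\<close> by blast
qed

private lemma fill_hole_hole_at_most_two:
  assumes "(T1,K) \<in> fill_hole A S1 S2 H" "(T2,K) \<in> fill_hole A S1 S2 H"
    "(T3,K) \<in> fill_hole A S1 S2 H" and "K \<noteq> {}"
  shows "T1 = T2 \<or> T1 = T3 \<or> T2 = T3"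
proof -
  from assms have "(T1,K) \<in> A" "(T2,K) \<in> A" "(T3,K) \<in> A" by (auto elim: fill_holeE)
  then show ?thesis using polestar_hole_at_most_two[OF A] \<open>K \<noteq> {}\<close> by blast
qed

lemma polestar_system_fill_hole: "polestar_system X (fill_hole A S1 S2 H)"
  by (rule polestar_systemI) (fact fill_hole_pairs fill_hole_covers fill_hole_overlap
      fill_hole_hole_in fill_hole_hole_twin fill_hole_hole_at_most_two)+

lemma polestar_le_fill_hole: "polestar_le A (fill_hole A S1 S2 H)"
proof (rule polestar_leI)
  fix S K assume SK: "(S,K) \<in> A"
  show "\<exists>T K'. (T,K') \<in> fill_hole A S1 S2 H \<and> S \<subseteq> T \<and> (K \<subseteq> T \<or> K' = K)"
  proof (cases "S = S1 \<or> S = S2 \<or> S = H")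
    case True
    with SK hole_of_S1 hole_of_S2 hole_of_H have "K = H \<or> K = {}" by blast
    moreover have "(S1 \<union> S2 \<union> H, {}) \<in> fill_hole A S1 S2 H" by (simp add: fill_hole_iff)
    ultimately show ?thesis using True by blast
  next
    case False
    with SK have "(S,K) \<in> fill_hole A S1 S2 H" by (simp add: fill_hole_iff)
    then show ?thesis by blast
  qed
next
  fix T K S assume "(T,K) \<in> fill_hole A S1 S2 H" "K \<noteq> {}"
  then have "(T,K) \<in> A" by (auto elim: fill_holeE)
  then show "\<exists>S'. (S',K) \<in> A \<and> S' \<subseteq> T" by blast
qed

lemma fill_hole_le:
  assumes B: "polestar_system X B" and AB: "polestar_le A B"
    and U: "(U,L) \<in> B" "S1 \<subseteq> U" "S2 \<subseteq> U" "H \<subseteq> U"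
  shows "polestar_le (fill_hole A S1 S2 H) B"
proof (rule polestar_leI)
  fix S K assume "(S,K) \<in> fill_hole A S1 S2 H"
  then show "\<exists>T K'. (T,K') \<in> B \<and> S \<subseteq> T \<and> (K \<subseteq> T \<or> K' = K)"
  proof (cases rule: fill_holeE)
    case 1
    with U show ?thesis by blast
  next
    case 2
    obtain T K' where "(T,K') \<in> B" "S \<subseteq> T" "K \<subseteq> T \<or> K' = K"
      using AB 2(1) by (rule polestar_le_partD)
    then show ?thesis by blast
  qed
next
  fix T K S assume TK: "(T,K) \<in> B" "K \<noteq> {}" and SK: "(S,K) \<in> fill_hole A S1 S2 H"
  from SK TK(2) have old: "(S,K) \<in> A" "S \<noteq> S1" "S \<noteq> S2" by (auto elim: fill_holeE)
  obtain S' where S': "(S',K) \<in> A" "S' \<subseteq> T" using AB TK old(1) by (rule polestar_le_holeD)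
  have "K \<noteq> H" using other_hole old by blast
  with S'(1) TK(2) have "(S',K) \<in> fill_hole A S1 S2 H" by (rule fill_hole_keeps_hole)
  with S'(2) show "\<exists>S'. (S',K) \<in> fill_hole A S1 S2 H \<and> S' \<subseteq> T" by blast
qed

lemma parts_fill_hole: "parts (fill_hole A S1 S2 H) = insert (S1 \<union> S2 \<union> H) (parts A - {S1,S2,H})"
proof -
  define U where "U = S1 \<union> S2 \<union> H"
  have "parts (fill_hole A S1 S2 H) = insert U (parts A - {S1,S2,H})"
    unfolding parts_def fill_hole_iff U_def[symmetric] by blast
  then show ?thesis unfolding U_def .
qed

lemma holes_fill_hole: "holes (fill_hole A S1 S2 H) = holes A - {H}"
proof
  show "holes (fill_hole A S1 S2 H) \<subseteq> holes A - {H}"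
  proof
    fix K assume "K \<in> holes (fill_hole A S1 S2 H)"
    then obtain S where SK: "(S,K) \<in> fill_hole A S1 S2 H" and "K \<noteq> {}" unfolding holes_def by blast
    with SK have old: "(S,K) \<in> A" "S \<noteq> S1" "S \<noteq> S2" by (auto elim: fill_holeE)
    then have "K \<noteq> H" by (rule other_hole)
    with old(1) \<open>K \<noteq> {}\<close> show "K \<in> holes A - {H}" by (blast intro: in_holesI)
  qed
  show "holes A - {H} \<subseteq> holes (fill_hole A S1 S2 H)"
    unfolding holes_def using fill_hole_keeps_hole by blast
qed

lemma polestar_rank_fill_hole:
  assumes "finite X"
  shows "polestar_rank X (fill_hole A S1 S2 H) = Suc (polestar_rank X A)"
proof -
  have in_parts: "S1 \<in> parts A" "S2 \<in> parts A" "H \<in> parts A"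
    using S1_in S2_in H_in by (blast intro: in_partsI)+
  have three: "card {S1,S2,H} = 3" using S1_ne_S2 satellites_ne_H by simp
  have "S1 \<union> S2 \<union> H \<notin> parts A"
  proof
    assume "S1 \<union> S2 \<union> H \<in> parts A"
    then obtain K where "(S1 \<union> S2 \<union> H, K) \<in> A" unfolding parts_def by blast
    from polestar_overlap[OF A this S1_in] polestar_pairD(3)[OF A S1_in]
    have "S1 \<union> S2 \<union> H = S1" by blast
    with polestar_pairD(4)[OF A S1_in] H_ne show False by blast
  qed
  then have parts_card: "card (parts (fill_hole A S1 S2 H)) = Suc (card (parts A) - 3)"
    unfolding parts_fill_hole
    using card_insert_Diff[OF finite_parts[OF assms A], of "{S1,S2,H}"] in_parts three by simp
  have "3 \<le> card (parts A)"
    using card_mono[OF finite_parts[OF assms A], of "{S1,S2,H}"] in_parts three by simp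
  moreover have "H \<in> holes A" using S1_in H_ne by (rule in_holesI)
  then have holes_card: "card (holes (fill_hole A S1 S2 H)) = card (holes A) - 1"
    and "1 \<le> card (holes A)"
    unfolding holes_fill_hole using finite_holes[OF assms A] by (auto simp: Suc_le_eq card_gt_0_iff)
  ultimately show ?thesis
    using card_parts_le[OF assms A] unfolding polestar_rank_def parts_card holes_card by arith
qed

end

definition make_hole :: "'a sps \<Rightarrow> 'a set \<Rightarrow> 'a set \<Rightarrow> 'a set \<Rightarrow> 'a sps" where
  "make_hole A S1 S2 H = insert (S1,H) (insert (S2,H) (A - {(S1,{}), (S2,{})}))"

context
  fixes X :: "'a set" and A :: "'a sps" and S1 S2 H :: "'a set"
  assumes A: "polestar_system X A"
    and S1_in: "(S1,{}) \<in> A" and S2_in: "(S2,{}) \<in> A" and H_in: "(H,{}) \<in> A"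
    and S1_ne_S2: "S1 \<noteq> S2" and S1_ne_H: "S1 \<noteq> H" and S2_ne_H: "S2 \<noteq> H"
    and S1_not_hole: "\<And>S. (S,S1) \<notin> A" and S2_not_hole: "\<And>S. (S,S2) \<notin> A"
    and H_not_hole: "\<And>S. (S,H) \<notin> A"
begin

private lemma H_ne: "H \<noteq> {}"
  using polestar_pairD(3)[OF A H_in] .

private lemma disjoint: "S1 \<inter> H = {}" "S2 \<inter> H = {}" "S1 \<inter> S2 = {}"
  using polestar_overlap[OF A S1_in H_in] polestar_overlap[OF A S2_in H_in]
    polestar_overlap[OF A S1_in S2_in] S1_ne_H S2_ne_H S1_ne_S2 by blast+

private lemma S1_free: "(S1,K) \<in> A \<Longrightarrow> K = {}"
  using polestar_overlap[OF A _ S1_in] polestar_pairD(3)[OF A S1_in] by auto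

private lemma S2_free: "(S2,K) \<in> A \<Longrightarrow> K = {}"
  using polestar_overlap[OF A _ S2_in] polestar_pairD(3)[OF A S2_in] by auto

lemma make_hole_iff:
  "(S,K) \<in> make_hole A S1 S2 H \<longleftrightarrow>
     ((S = S1 \<or> S = S2) \<and> K = H) \<or> ((S,K) \<in> A \<and> S \<noteq> S1 \<and> S \<noteq> S2)"
  unfolding make_hole_def using S1_free S2_free H_ne by auto

lemma make_holeE:
  assumes "(S,K) \<in> make_hole A S1 S2 H"
  obtains "S = S1 \<or> S = S2" "K = H" | "(S,K) \<in> A" "S \<noteq> S1" "S \<noteq> S2"
proof -
  have "((S = S1 \<or> S = S2) \<and> K = H) \<or> ((S,K) \<in> A \<and> S \<noteq> S1 \<and> S \<noteq> S2)"
    using assms by (simp only: make_hole_iff)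
  then show thesis using that by (elim disjE conjE) simp_all
qed

private lemma old_disjoint: "(S,K) \<in> A \<Longrightarrow> S \<noteq> S1 \<Longrightarrow> S \<noteq> S2 \<Longrightarrow> S \<inter> S1 = {} \<and> S \<inter> S2 = {}"
  using polestar_overlap[OF A _ S1_in] polestar_overlap[OF A _ S2_in] by blast

private lemma make_hole_keeps_hole:
  assumes "(S,K) \<in> A" "K \<noteq> {}"
  shows "(S,K) \<in> make_hole A S1 S2 H"
proof -
  from assms S1_free S2_free have "S \<noteq> S1" "S \<noteq> S2" by blast+
  with assms(1) show ?thesis by (simp add: make_hole_iff)
qed

private lemma make_hole_pairs:
  assumes "(S,K) \<in> make_hole A S1 S2 H"
  shows "S \<subseteq> X \<and> K \<subseteq> X \<and> S \<noteq> {} \<and> S \<inter> K = {}"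
  using assms
proof (cases rule: make_holeE)
  case 1
  then show ?thesis
    using polestar_pairD(1,3)[OF A S1_in] polestar_pairD(1,3)[OF A S2_in] polestar_pairD(1)[OF A H_in]
      disjoint by blast
next
  case 2
  then show ?thesis using polestar_pairD[OF A 2(1)] by simp
qed

private lemma make_hole_covers:
  assumes "x \<in> X" shows "\<exists>S K. (S,K) \<in> make_hole A S1 S2 H \<and> x \<in> S"
proof -
  obtain S K where SK: "(S,K) \<in> A" "x \<in> S" using polestar_covers[OF A assms] .
  show ?thesis
  proof (cases "S = S1 \<or> S = S2")
    case True
    then have "(S,H) \<in> make_hole A S1 S2 H" by (simp add: make_hole_iff)
    with SK(2) show ?thesis by blast
  next
    case False
    with SK have "(S,K) \<in> make_hole A S1 S2 H" by (simp add: make_hole_iff)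
    with SK(2) show ?thesis by blast
  qed
qed

private lemma make_hole_overlap:
  assumes SK: "(S,K) \<in> make_hole A S1 S2 H" and S'K': "(S',K') \<in> make_hole A S1 S2 H"
    and meet: "S \<inter> S' \<noteq> {}"
  shows "S = S' \<and> K = K'"
  using SK
proof (cases rule: make_holeE)
  case new: 1
  from S'K' show ?thesis
  proof (cases rule: make_holeE)
    case 1
    with new meet disjoint(3) show ?thesis by blast
  next
    case old: 2
    with new meet old_disjoint[OF old] show ?thesis by blast
  qed
next
  case old: 2
  from S'K' show ?thesis
  proof (cases rule: make_holeE)
    case new: 1
    with old meet old_disjoint[OF old] show ?thesis by blast
  qed (use old polestar_overlap[OF A _ _ meet] in blast)
qed

private lemma make_hole_hole_in:
  assumes SK: "(S,K) \<in> make_hole A S1 S2 H" and "K \<noteq> {}"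
  shows "(K,{}) \<in> make_hole A S1 S2 H"
  using SK
proof (cases rule: make_holeE)
  case 1
  with H_in S1_ne_H S2_ne_H show ?thesis by (simp add: make_hole_iff)
next
  case 2
  then have "(K,{}) \<in> A" "K \<noteq> S1" "K \<noteq> S2"
    using polestar_hole_in[OF A _ \<open>K \<noteq> {}\<close>] S1_not_hole S2_not_hole by blast+
  then show ?thesis by (simp add: make_hole_iff)
qed

private lemma make_hole_hole_twin:
  assumes SK: "(S,K) \<in> make_hole A S1 S2 H" and "K \<noteq> {}"
  shows "\<exists>S'. S' \<noteq> S \<and> (S',K) \<in> make_hole A S1 S2 H"
  using SK
proof (cases rule: make_holeE)
  case 1
  then have "(S1,K) \<in> make_hole A S1 S2 H" "(S2,K) \<in> make_hole A S1 S2 H"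
    by (simp_all add: make_hole_iff)
  with S1_ne_S2 show ?thesis by blast
next
  case 2
  obtain S' where "S' \<noteq> S" "(S',K) \<in> A" using polestar_hole_twin[OF A 2(1) \<open>K \<noteq> {}\<close>] .
  with make_hole_keeps_hole \<open>K \<noteq> {}\<close> show ?thesis by blast
qed

private lemma make_hole_hole_at_most_two:
  assumes in_C: "(T1,K) \<in> make_hole A S1 S2 H" "(T2,K) \<in> make_hole A S1 S2 H"
    "(T3,K) \<in> make_hole A S1 S2 H" and "K \<noteq> {}"
  shows "T1 = T2 \<or> T1 = T3 \<or> T2 = T3"
proof (cases "K = H")
  case True
  have "T = S1 \<or> T = S2" if "(T,K) \<in> make_hole A S1 S2 H" for T
    using that by (cases rule: make_holeE) (use True H_not_hole in blast)+
  with in_C show ?thesis by metis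
next
  case False
  with in_C have "(T1,K) \<in> A" "(T2,K) \<in> A" "(T3,K) \<in> A" by (auto elim: make_holeE)
  then show ?thesis using polestar_hole_at_most_two[OF A] \<open>K \<noteq> {}\<close> by blast
qed

lemma polestar_system_make_hole: "polestar_system X (make_hole A S1 S2 H)"
  by (rule polestar_systemI) (fact make_hole_pairs make_hole_covers make_hole_overlap
      make_hole_hole_in make_hole_hole_twin make_hole_hole_at_most_two)+

lemma polestar_le_make_hole: "polestar_le A (make_hole A S1 S2 H)"
proof (rule polestar_leI)
  fix S K assume SK: "(S,K) \<in> A"
  show "\<exists>T K'. (T,K') \<in> make_hole A S1 S2 H \<and> S \<subseteq> T \<and> (K \<subseteq> T \<or> K' = K)"
  proof (cases "S = S1 \<or> S = S2")
    case True
    with SK S1_free S2_free have "K = {}" by blast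
    moreover from True have "(S,H) \<in> make_hole A S1 S2 H" by (simp add: make_hole_iff)
    ultimately show ?thesis by blast
  next
    case False
    with SK have "(S,K) \<in> make_hole A S1 S2 H" by (simp add: make_hole_iff)
    then show ?thesis by blast
  qed
next
  fix T K S assume "(T,K) \<in> make_hole A S1 S2 H" and SK: "(S,K) \<in> A"
  then show "\<exists>S'. (S',K) \<in> A \<and> S' \<subseteq> T"
    by (cases rule: make_holeE) (use H_not_hole in blast)+
qed

lemma make_hole_le:
  assumes B: "polestar_system X B" and AB: "polestar_le A B"
    and S1_B: "(S1,H) \<in> B" and S2_B: "(S2,H) \<in> B"
  shows "polestar_le (make_hole A S1 S2 H) B"
proof (rule polestar_leI)
  fix S K assume "(S,K) \<in> make_hole A S1 S2 H"
  then show "\<exists>T K'. (T,K') \<in> B \<and> S \<subseteq> T \<and> (K \<subseteq> T \<or> K' = K)"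
  proof (cases rule: make_holeE)
    case 1
    with S1_B S2_B show ?thesis by blast
  next
    case 2
    obtain T K' where "(T,K') \<in> B" "S \<subseteq> T" "K \<subseteq> T \<or> K' = K"
      using AB 2(1) by (rule polestar_le_partD)
    then show ?thesis by blast
  qed
next
  fix T K S assume TK: "(T,K) \<in> B" "K \<noteq> {}" and SK: "(S,K) \<in> make_hole A S1 S2 H"
  show "\<exists>S'. (S',K) \<in> make_hole A S1 S2 H \<and> S' \<subseteq> T"
  proof (cases "K = H")
    case True
    with polestar_hole_at_most_two[OF B S1_B S2_B _ H_ne] TK(1) S1_ne_S2 have "T = S1 \<or> T = S2"
      by blast
    with True have "(T,K) \<in> make_hole A S1 S2 H" by (simp add: make_hole_iff)
    then show ?thesis by blast
  next
    case False
    with SK have "(S,K) \<in> A" by (auto elim: make_holeE)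
    obtain S' where "(S',K) \<in> A" "S' \<subseteq> T" using AB TK \<open>(S,K) \<in> A\<close> by (rule polestar_le_holeD)
    with make_hole_keeps_hole TK(2) show ?thesis by blast
  qed
qed

lemma parts_make_hole: "parts (make_hole A S1 S2 H) = parts A"
proof (rule set_eqI)
  fix S
  show "S \<in> parts (make_hole A S1 S2 H) \<longleftrightarrow> S \<in> parts A"
  proof
    assume "S \<in> parts (make_hole A S1 S2 H)"
    then obtain K where "(S,K) \<in> make_hole A S1 S2 H" unfolding parts_def by blast
    then show "S \<in> parts A"
      by (cases rule: make_holeE) (use S1_in S2_in in \<open>auto intro: in_partsI\<close>)
  next
    assume "S \<in> parts A"
    then obtain K where SK: "(S,K) \<in> A" unfolding parts_def by blast
    show "S \<in> parts (make_hole A S1 S2 H)"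
    proof (cases "S = S1 \<or> S = S2")
      case True
      then have "(S,H) \<in> make_hole A S1 S2 H" by (simp add: make_hole_iff)
      then show ?thesis by (rule in_partsI)
    next
      case False
      with SK have "(S,K) \<in> make_hole A S1 S2 H" by (simp add: make_hole_iff)
      then show ?thesis by (rule in_partsI)
    qed
  qed
qed

lemma holes_make_hole: "holes (make_hole A S1 S2 H) = insert H (holes A)"
proof
  show "holes (make_hole A S1 S2 H) \<subseteq> insert H (holes A)"
  proof
    fix K assume "K \<in> holes (make_hole A S1 S2 H)"
    then obtain S where "(S,K) \<in> make_hole A S1 S2 H" "K \<noteq> {}" unfolding holes_def by blast
    then show "K \<in> insert H (holes A)" by (cases rule: make_holeE) (auto intro: in_holesI)
  qed
  have "(S1,H) \<in> make_hole A S1 S2 H" by (simp add: make_hole_iff)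
  then show "insert H (holes A) \<subseteq> holes (make_hole A S1 S2 H)"
    unfolding holes_def using make_hole_keeps_hole H_ne by blast
qed

lemma polestar_rank_make_hole:
  assumes "finite X"
  shows "polestar_rank X (make_hole A S1 S2 H) = Suc (polestar_rank X A)"
proof -
  have "H \<notin> holes A" using H_not_hole unfolding holes_def by blast
  then have "card (holes (make_hole A S1 S2 H)) = Suc (card (holes A))"
    unfolding holes_make_hole using finite_holes[OF assms A] by simp
  then show ?thesis
    using card_parts_le[OF assms A] unfolding polestar_rank_def parts_make_hole by simp
qed

end

section \<open>A move below any larger system\<close>

text \<open>A part \<open>U\<close> of \<open>B\<close> that swallows two parts of \<open>A\<close> also swallows both satellites of every
  hole of \<open>A\<close> lying in \<open>U\<close>: otherwise that hole would be a whole part of \<open>B\<close>, namely \<open>U\<close>.\<close>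

lemma satellite_inside_merging_part:
  assumes A: "polestar_system X A" and B: "polestar_system X B" and AB: "polestar_le A B"
    and U: "(U,L) \<in> B" and P: "(P1,H1) \<in> A" "(P2,H2) \<in> A" "P1 \<noteq> P2" "P1 \<subseteq> U" "P2 \<subseteq> U"
    and S: "(S,Q) \<in> A" "Q \<noteq> {}" "Q \<subseteq> U"
  shows "S \<subseteq> U"
proof -
  obtain T K where T: "(T,K) \<in> B" "S \<subseteq> T" "Q \<subseteq> T \<or> K = Q"
    using AB S(1) by (rule polestar_le_partD)
  show ?thesis
  proof (cases "Q \<subseteq> T")
    case True
    with S(2,3) have "T \<inter> U \<noteq> {}" by blast
    with polestar_overlap[OF B T(1) U] T(2) show ?thesis by blast
  next
    case False
    with T(3) have Q_B: "(Q,{}) \<in> B" using polestar_hole_in[OF B T(1)] S(2) by simp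
    from S(2,3) have "Q \<inter> U \<noteq> {}" by blast
    with polestar_overlap[OF B Q_B U] have "Q = U" by blast
    have Q_A: "(Q,{}) \<in> A" using polestar_hole_in[OF A S(1,2)] .
    have "P1 \<inter> Q \<noteq> {}" "P2 \<inter> Q \<noteq> {}"
      using polestar_pairD(3)[OF A P(1)] polestar_pairD(3)[OF A P(2)] P(4,5) \<open>Q = U\<close> by blast+
    with polestar_overlap[OF A P(1) Q_A] polestar_overlap[OF A P(2) Q_A] have "P1 = Q" "P2 = Q"
      by blast+
    with P(3) show ?thesis by simp
  qed
qed

text \<open>If no hole of \<open>A\<close> lies in \<open>U\<close>, a holed part of \<open>A\<close> inside \<open>U\<close> keeps its hole, which is then
  the hole \<open>L\<close> of \<open>U\<close>; two of them would force the twin of \<open>U\<close> to meet \<open>U\<close>.\<close>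

lemma merging_part_has_free_part:
  assumes A: "polestar_system X A" and B: "polestar_system X B" and AB: "polestar_le A B"
    and U: "(U,L) \<in> B" and P: "(P1,H1) \<in> A" "(P2,H2) \<in> A" "P1 \<noteq> P2" "P1 \<subseteq> U" "P2 \<subseteq> U"
    and no_hole: "\<And>S Q. (S,Q) \<in> A \<Longrightarrow> Q \<noteq> {} \<Longrightarrow> \<not> Q \<subseteq> U"
  shows "H1 = {} \<or> H2 = {}"
proof (rule ccontr)
  assume "\<not> ?thesis"
  then have H_ne: "H1 \<noteq> {}" "H2 \<noteq> {}" by auto
  have hole_is_L: "K = L" if PK: "(Pi,K) \<in> A" "K \<noteq> {}" "Pi \<subseteq> U" for Pi K
  proof -
    obtain T K' where T: "(T,K') \<in> B" "Pi \<subseteq> T" "K \<subseteq> T \<or> K' = K"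
      using AB PK(1) by (rule polestar_le_partD)
    have "Pi \<noteq> {}" using polestar_pairD(3)[OF A PK(1)] .
    with T(2) PK(3) have "T \<inter> U \<noteq> {}" by blast
    then have "T = U" "K' = L" using polestar_overlap[OF B T(1) U] by auto
    with T(3) no_hole[OF PK(1,2)] show ?thesis by blast
  qed
  have "H1 = L" "H2 = L" using hole_is_L P H_ne by blast+
  with P(1,2) H_ne have P_L: "(P1,L) \<in> A" "(P2,L) \<in> A" "L \<noteq> {}" by simp_all
  obtain U' where U': "U' \<noteq> U" "(U',L) \<in> B" using polestar_hole_twin[OF B U P_L(3)] .
  obtain S' where S': "(S',L) \<in> A" "S' \<subseteq> U'" using AB U'(2) P_L(3) P_L(1) by (rule polestar_le_holeD)
  from polestar_hole_at_most_two[OF A P_L(1,2) S'(1) P_L(3)] P(3,4,5) have "S' \<subseteq> U" by blast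
  moreover have "S' \<noteq> {}" using polestar_pairD(3)[OF A S'(1)] .
  ultimately have "U' \<inter> U \<noteq> {}" using S'(2) by blast
  with polestar_overlap[OF B U'(2) U] U'(1) show False by blast
qed

lemma rank_step_merging:
  assumes X: "finite X" and A: "polestar_system X A" and B: "polestar_system X B"
    and AB: "polestar_le A B"
    and U: "(U,L) \<in> B" and P: "(P1,H1) \<in> A" "(P2,H2) \<in> A" "P1 \<noteq> P2" "P1 \<subseteq> U" "P2 \<subseteq> U"
  shows "\<exists>C. polestar_system X C \<and> polestar_le A C \<and> polestar_le C B \<and>
    polestar_rank X C = Suc (polestar_rank X A)"
proof (cases "\<exists>S Q. (S,Q) \<in> A \<and> Q \<noteq> {} \<and> Q \<subseteq> U")
  case True
  then obtain S1 Q where S1: "(S1,Q) \<in> A" "Q \<noteq> {}" "Q \<subseteq> U" by blast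
  obtain S2 where S2: "S2 \<noteq> S1" "(S2,Q) \<in> A" using polestar_hole_twin[OF A S1(1,2)] .
  have "S1 \<subseteq> U" "S2 \<subseteq> U"
    using satellite_inside_merging_part[OF A B AB U P] S1 S2(2) by blast+
  note move = A S1(1) S2(2) S2(1)[symmetric] S1(2)
  show ?thesis
  proof (intro exI conjI)
    show "polestar_system X (fill_hole A S1 S2 Q)" by (rule polestar_system_fill_hole[OF move])
    show "polestar_le A (fill_hole A S1 S2 Q)" by (rule polestar_le_fill_hole[OF move])
    show "polestar_le (fill_hole A S1 S2 Q) B"
      by (rule fill_hole_le[OF move B AB U]) (use \<open>S1 \<subseteq> U\<close> \<open>S2 \<subseteq> U\<close> S1(3) in simp_all)
    show "polestar_rank X (fill_hole A S1 S2 Q) = Suc (polestar_rank X A)"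
      by (rule polestar_rank_fill_hole[OF move X])
  qed
next
  case False
  then have no_hole: "\<And>S Q. (S,Q) \<in> A \<Longrightarrow> Q \<noteq> {} \<Longrightarrow> \<not> Q \<subseteq> U" by blast
  have P_ne: "P1 \<noteq> {}" "P2 \<noteq> {}" using polestar_pairD(3)[OF A P(1)] polestar_pairD(3)[OF A P(2)] .
  have not_hole: "(S,P1) \<notin> A" "(S,P2) \<notin> A" for S using no_hole P(4,5) P_ne by blast+
  have merge: "\<exists>C. polestar_system X C \<and> polestar_le A C \<and> polestar_le C B \<and>
      polestar_rank X C = Suc (polestar_rank X A)"
    if move: "(Pa,Ha) \<in> A" "(Q,{}) \<in> A" "Pa \<noteq> Q" "\<And>S. (S,Pa) \<notin> A" "\<And>S. (S,Q) \<notin> A"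
      and inside: "Pa \<subseteq> U" "Q \<subseteq> U" for Pa Ha Q
  proof (intro exI conjI)
    show "polestar_system X (merge_parts A Pa Ha Q)" by (rule polestar_system_merge_parts[OF A move])
    show "polestar_le A (merge_parts A Pa Ha Q)" by (rule polestar_le_merge_parts[OF A move])
    show "polestar_le (merge_parts A Pa Ha Q) B" by (rule merge_parts_le[OF A move B AB U inside])
    show "polestar_rank X (merge_parts A Pa Ha Q) = Suc (polestar_rank X A)"
      by (rule polestar_rank_merge_parts[OF A move X])
  qed
  from merging_part_has_free_part[OF A B AB U P no_hole] show ?thesis
  proof
    assume "H1 = {}"
    with P not_hole show ?thesis by (intro merge[of P2 H2 P1]) auto
  next
    assume "H2 = {}"
    with P not_hole show ?thesis by (intro merge[of P1 H1 P2]) auto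
  qed
qed

context
  fixes X :: "'a set" and A B :: "'a sps"
  assumes A: "polestar_system X A" and B: "polestar_system X B" and AB: "polestar_le A B"
    and unmerged: "\<And>U L P1 H1 P2 H2. (U,L) \<in> B \<Longrightarrow> (P1,H1) \<in> A \<Longrightarrow> (P2,H2) \<in> A \<Longrightarrow>
      P1 \<subseteq> U \<Longrightarrow> P2 \<subseteq> U \<Longrightarrow> P1 = P2"
begin

private lemma part_kept:
  assumes SH: "(S,H) \<in> A"
  obtains K where "(S,K) \<in> B"
proof -
  obtain T K where T: "(T,K) \<in> B" "S \<subseteq> T" using AB SH by (rule polestar_le_partD)
  have "T \<subseteq> S"
  proof
    fix y assume "y \<in> T"
    then have "y \<in> X" using polestar_pairD(1)[OF B T(1)] by blast
    then obtain S' H' where S': "(S',H') \<in> A" "y \<in> S'" using polestar_covers[OF A] by blast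
    obtain T' K' where T': "(T',K') \<in> B" "S' \<subseteq> T'" using AB S'(1) by (rule polestar_le_partD)
    from \<open>y \<in> T\<close> S'(2) T'(2) have "T' \<inter> T \<noteq> {}" by blast
    then have "T' = T" using polestar_overlap[OF B T'(1) T(1)] by blast
    with unmerged[OF T(1) S'(1) SH] T'(2) T(2) have "S' = S" by blast
    with S'(2) show "y \<in> S" by simp
  qed
  with T(2) have "T = S" by (rule subset_antisym[rotated])
  with T(1) that show thesis by blast
qed

private lemma part_came_from:
  assumes TK: "(T,K) \<in> B"
  obtains H where "(T,H) \<in> A"
proof -
  obtain y where "y \<in> T" using polestar_pairD(3)[OF B TK] by blast
  then have "y \<in> X" using polestar_pairD(1)[OF B TK] by blast
  then obtain S H where S: "(S,H) \<in> A" "y \<in> S" using polestar_covers[OF A] by blast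
  obtain K' where "(S,K') \<in> B" using S(1) by (rule part_kept)
  with \<open>y \<in> T\<close> S(2) polestar_overlap[OF B _ TK] have "S = T" by blast
  with S(1) that show thesis by blast
qed

private lemma hole_kept:
  assumes SH: "(S,H) \<in> A" "H \<noteq> {}"
  shows "(S,H) \<in> B"
proof -
  obtain T K where T: "(T,K) \<in> B" "S \<subseteq> T" "H \<subseteq> T \<or> K = H"
    using AB SH(1) by (rule polestar_le_partD)
  obtain K' where "(S,K') \<in> B" using SH(1) by (rule part_kept)
  moreover have "S \<noteq> {}" "S \<inter> H = {}" using polestar_pairD(3,4)[OF A SH(1)] .
  ultimately have "S = T" using polestar_overlap[OF B _ T(1)] T(2) by blast
  with \<open>S \<inter> H = {}\<close> SH(2) T(3) have "K = H" by blast
  with T(1) \<open>S = T\<close> show ?thesis by simp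
qed

private lemma free_in_A:
  assumes TK: "(T,K) \<in> B" and new: "(T,K) \<notin> A \<or> K = {}"
  shows "(T,{}) \<in> A"
proof -
  obtain H where TH: "(T,H) \<in> A" using TK by (rule part_came_from)
  have "H = {}"
  proof (rule ccontr)
    assume "H \<noteq> {}"
    with hole_kept[OF TH] polestar_overlap[OF B _ TK] polestar_pairD(3)[OF B TK] have "H = K"
      by blast
    with TH \<open>H \<noteq> {}\<close> new show False by blast
  qed
  with TH show ?thesis by simp
qed

private lemma new_hole_exists:
  assumes "A \<noteq> B"
  obtains S1 H where "(S1,H) \<in> B" "H \<noteq> {}" "(S1,H) \<notin> A"
proof (rule ccontr)
  assume "\<not> thesis"
  with that have old: "(S,H) \<in> A" if "(S,H) \<in> B" "H \<noteq> {}" for S H using that by blast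
  have "A \<subseteq> B"
  proof (rule subsetI)
    fix p assume "p \<in> A"
    then obtain S H where p: "p = (S,H)" and SH: "(S,H) \<in> A" by (cases p) auto
    show "p \<in> B"
    proof (cases "H = {}")
      case True
      obtain K where SK: "(S,K) \<in> B" using SH by (rule part_kept)
      have "K = {}"
      proof (rule ccontr)
        assume "K \<noteq> {}"
        with old[OF SK] polestar_overlap[OF A _ SH] polestar_pairD(3)[OF A SH] True show False
          by blast
      qed
      with SK p True show ?thesis by simp
    qed (use hole_kept SH p in simp)
  qed
  moreover have "B \<subseteq> A"
  proof (rule subsetI)
    fix p assume "p \<in> B"
    then obtain T K where p: "p = (T,K)" and TK: "(T,K) \<in> B" by (cases p) auto
    show "p \<in> A"
    proof (cases "K = {}")
      case True
      with free_in_A[OF TK] p show ?thesis by simp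
    qed (use old TK p in simp)
  qed
  ultimately show False using assms by blast
qed

private lemma twin_not_hole:
  assumes "(Si,H) \<in> B" "H \<noteq> {}"
  shows "(S,Si) \<notin> A"
proof
  assume "(S,Si) \<in> A"
  moreover have "Si \<noteq> {}" "Si \<inter> H = {}" using polestar_pairD(3,4)[OF B assms(1)] .
  ultimately have "(Si,{}) \<in> B" using hole_kept polestar_hole_in[OF B] by blast
  with polestar_overlap[OF B _ assms(1)] \<open>Si \<noteq> {}\<close> assms(2) show False by blast
qed

lemma rank_step_unmerged:
  assumes X: "finite X" and "A \<noteq> B"
  shows "\<exists>C. polestar_system X C \<and> polestar_le A C \<and> polestar_le C B \<and>
    polestar_rank X C = Suc (polestar_rank X A)"
proof -
  obtain S1 H where S1: "(S1,H) \<in> B" "H \<noteq> {}" "(S1,H) \<notin> A"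
    using new_hole_exists[OF assms(2)] .
  obtain S2 where S2: "S2 \<noteq> S1" "(S2,H) \<in> B" using polestar_hole_twin[OF B S1(1,2)] .
  have satellites: "S = S1 \<or> S = S2" if "(S,H) \<in> B" for S
    using polestar_hole_at_most_two[OF B S1(1) S2(2) that S1(2)] S2(1) by blast
  have S2_new: "(S2,H) \<notin> A"
  proof
    assume "(S2,H) \<in> A"
    then obtain S3 where "S3 \<noteq> S2" "(S3,H) \<in> A" using polestar_hole_twin[OF A _ S1(2)] by blast
    with satellites hole_kept S1(2,3) show False by blast
  qed
  have H_B: "(H,{}) \<in> B" using polestar_hole_in[OF B S1(1,2)] .
  have free: "(S1,{}) \<in> A" "(S2,{}) \<in> A" "(H,{}) \<in> A"
    using free_in_A S1(1,3) S2(2) S2_new H_B by blast+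
  have H_not_hole: "(S,H) \<notin> A" for S
    using satellites hole_kept S1(2,3) S2_new by blast
  have distinct: "S1 \<noteq> S2" "S1 \<noteq> H" "S2 \<noteq> H"
    using S2(1) polestar_pairD(3,4)[OF B S1(1)] polestar_pairD(3,4)[OF B S2(2)] by auto
  note move = A free distinct twin_not_hole[OF S1(1,2)] twin_not_hole[OF S2(2) S1(2)] H_not_hole
  show ?thesis
  proof (intro exI conjI)
    show "polestar_system X (make_hole A S1 S2 H)" by (rule polestar_system_make_hole[OF move])
    show "polestar_le A (make_hole A S1 S2 H)" by (rule polestar_le_make_hole[OF move])
    show "polestar_le (make_hole A S1 S2 H) B" by (rule make_hole_le[OF move B AB S1(1) S2(2)])
    show "polestar_rank X (make_hole A S1 S2 H) = Suc (polestar_rank X A)"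
      by (rule polestar_rank_make_hole[OF move X])
  qed
qed

end

lemma polestar_rank_step:
  assumes X: "finite X" and A: "polestar_system X A" and B: "polestar_system X B"
    and AB: "polestar_le A B" and "A \<noteq> B"
  shows "\<exists>C. polestar_system X C \<and> polestar_le A C \<and> polestar_le C B \<and>
    polestar_rank X C = Suc (polestar_rank X A)"
proof (cases "\<exists>U L P1 H1 P2 H2. (U,L) \<in> B \<and> (P1,H1) \<in> A \<and> (P2,H2) \<in> A \<and>
    P1 \<noteq> P2 \<and> P1 \<subseteq> U \<and> P2 \<subseteq> U")
  case True
  then show ?thesis using rank_step_merging[OF X A B AB] by blast
next
  case False
  then show ?thesis using rank_step_unmerged[OF A B AB _ X \<open>A \<noteq> B\<close>] by blast
qed

lemma partial_order_polestars: "partial_order_on' (polestars X) sps_le"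
  unfolding partial_order_on'_def
proof (intro conjI ballI impI)
  have le: "sps_le A B \<longleftrightarrow> polestar_le A B" if "A \<in> polestars X" "B \<in> polestars X" for A B
    using that sps_le_iff_polestar_le unfolding polestars_def by blast
  fix A B C assume in_P: "A \<in> polestars X" "B \<in> polestars X" "C \<in> polestars X"
  then have sys: "polestar_system X A" "polestar_system X B" "polestar_system X C"
    unfolding polestars_def by blast+
  show "sps_le A A" using le[OF in_P(1,1)] polestar_le_refl by blast
  show "A = B" if "sps_le A B \<and> sps_le B A"
    using that le[OF in_P(1,2)] le[OF in_P(2,1)] polestar_le_antisym[OF sys(1,2)] by blast
  show "sps_le A C" if "sps_le A B \<and> sps_le B C"
    using that le[OF in_P(1,2)] le[OF in_P(2,3)] le[OF in_P(1,3)] polestar_le_trans[OF sys(1,3)]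
    by blast
qed

lemma ranked_poset_polestars:
  assumes "finite X" "X \<noteq> {}"
  shows "ranked_poset (polestars X) sps_le (polestar_rank X) {({x},{}) | x. x \<in> X} {(X,{})}"
proof
  show "finite (polestars X)" using finite_polestars[OF assms(1)] .
  show "partial_order_on' (polestars X) sps_le" by (rule partial_order_polestars)
  show "{({x},{}) | x. x \<in> X} \<in> polestars X"
    unfolding polestars_def using polestar_system_singletons by blast
  show "{(X,{})} \<in> polestars X"
    unfolding polestars_def using polestar_system_whole[OF assms(2)] by blast
  show "polestar_rank X {({x},{}) | x. x \<in> X} = 0" using polestar_rank_singletons[OF assms(1)] .
  fix A assume "A \<in> polestars X"
  then have A: "polestar_system X A" unfolding polestars_def by blast
  show "sps_le {({x},{}) | x. x \<in> X} A"
    using singletons_polestar_le[OF A] sps_le_iff_polestar_le[OF polestar_system_singletons A] by blast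
  show "sps_le A {(X,{})}"
    using polestar_le_whole[OF A] sps_le_iff_polestar_le[OF A polestar_system_whole[OF assms(2)]]
    by blast
next
  fix A B assume "A \<in> polestars X" "B \<in> polestars X" and "sps_le A B" "A \<noteq> B"
  then have sys: "polestar_system X A" "polestar_system X B" unfolding polestars_def by blast+
  with \<open>sps_le A B\<close> have "polestar_le A B" using sps_le_iff_polestar_le by blast
  then obtain C where C: "polestar_system X C" "polestar_le A C" "polestar_le C B"
      "polestar_rank X C = Suc (polestar_rank X A)"
    using polestar_rank_step[OF assms(1) sys _ \<open>A \<noteq> B\<close>] by blast
  then have "C \<in> polestars X" "sps_le A C" "sps_le C B"
    using sps_le_iff_polestar_le[OF sys(1) C(1)] sps_le_iff_polestar_le[OF C(1) sys(2)]
    unfolding polestars_def by blast+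
  with C(4) show "\<exists>C\<in>polestars X. sps_le A C \<and> sps_le C B \<and> polestar_rank X C = Suc (polestar_rank X A)"
    by blast
qed

theorem mainTheorem8:
  fixes X :: "'a set"
  assumes "finite X" and "X \<noteq> {}"
  shows "bounded_poset (polestars X) sps_le
       \<and> graded (polestars X) sps_le
       \<and> is_min (polestars X) sps_le {({x}, {}) | x. x \<in> X}
       \<and> is_max (polestars X) sps_le {(X, {})}
       \<and> (\<forall>\<S>\<in>polestars X.
            height (polestars X) sps_le \<S> = card X - card (parts \<S>) + card (holes \<S>)
          \<and> height (polestars X) sps_le \<S> \<in> {0..card X - 1})"
proof -
  interpret ranked_poset "polestars X" sps_le "polestar_rank X" "{({x},{}) | x. x \<in> X}" "{(X,{})}"
    using ranked_poset_polestars[OF assms] .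
  have "is_min (polestars X) sps_le {({x}, {}) | x. x \<in> X}"
    unfolding is_min_def using bot_in bot_le by blast
  moreover have "is_max (polestars X) sps_le {(X, {})}"
    unfolding is_max_def using top_in le_top by blast
  moreover have "height (polestars X) sps_le A = card X - card (parts A) + card (holes A)
      \<and> height (polestars X) sps_le A \<in> {0..card X - 1}" if A: "A \<in> polestars X" for A
  proof -
    have "polestar_rank X A \<le> polestar_rank X {(X,{})}" using rank_mono[OF A top_in le_top[OF A]] .
    then show ?thesis using height_eq_rank[OF A] polestar_rank_whole[of X]
      unfolding polestar_rank_def by simp
  qed
  ultimately show ?thesis using bounded graded by blast
qed

end
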